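(* Let $c\in(0,1)$ be a constant and $T^{-}_{c}(\alpha):=\frac{1-c}{\lambda}\log\alpha$. As $\alpha\to+\infty$, the normalized effective weight $\frac{\boldsymbol{w}(\boldsymbol{\theta}(T^{-}_{c}(\alpha);\alpha\bar{\boldsymbol{\theta}}_{\mathrm{init}}))}{\|\boldsymbol{w}(\boldsymbol{\theta}(T^{-}_{c}(\alpha);\alpha\bar{\boldsymbol{\theta}}_{\mathrm{init}}))\|_2}$ converges to the max $L^2$-margin direction $\boldsymbol{w}^*_2:=\arg\max_{\boldsymbol{w}\in\mathcal{S}^{d-1}}\min_{i\in[n]}y_i\langle\boldsymbol{w},\boldsymbol{x}_i\rangle$.
   Context: Training data $\{(\boldsymbol{x}_i,y_i)\}_{i=1}^n$ with $\boldsymbol{x}_i\in\mathbb{R}^d$, $y_i\in\{\pm1\}$, assumed linearly separable (there is $\boldsymbol{w}$ with $y_i\langle\boldsymbol{w},\boldsymbol{x}_i\rangle>0$ for all $i$). Diagonal linear net: parameters $\boldsymbol{\theta}=(\boldsymbol{u},\boldsymbol{v})\in\mathbb{R}^d\times\mathbb{R}^d$, output $f(\boldsymbol{\theta};\boldsymbol{x})=\sum_{k=1}^du_k^2x_k-\sum_{k=1}^dv_k^2x_k=\langle\boldsymbol{w}(\boldsymbol{\theta}),\boldsymbol{x}\rangle$ with effective weight $\boldsymbol{w}(\boldsymbol{\theta}):=\boldsymbol{u}^{\odot2}-\boldsymbol{v}^{\odot2}$. Loss $\mathcal{L}(\boldsymbol{\theta})=\frac1n\sum_ie^{-y_if(\boldsymbol{\theta};\boldsymbol{x}_i)}$,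 $\mathcal{L}_\lambda(\boldsymbol{\theta})=\mathcal{L}(\boldsymbol{\theta})+\frac\lambda2\|\boldsymbol{\theta}\|_2^2$, where $\lambda=\lambda(\alpha)>0$ satisfies $\lambda(\alpha)=\Theta(\alpha^{-p})$ for a constant $p>0$. $\bar{\boldsymbol{\theta}}_{\mathrm{init}}=(\boldsymbol{1},\boldsymbol{1})$, and $\boldsymbol{\theta}(t;\boldsymbol{\theta}_0)$ is the gradient flow $\frac{d\boldsymbol{\theta}}{dt}=-\nabla\mathcal{L}_\lambda(\boldsymbol{\theta})$ from $\boldsymbol{\theta}_0$. $\mathcal{S}^{d-1}$ is the unit sphere. *)

theory Defs
  imports "HOL-Analysis.Analysis" "HOL-Library.Landau_Symbols"
begin

definition eff_weight :: "(real^'d) \<times> (real^'d) \<Rightarrow> real^'d" where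
  "eff_weight \<theta> = (\<chi> k. (fst \<theta> $ k)^2 - (snd \<theta> $ k)^2)"

definition exp_loss :: "nat \<Rightarrow> (nat \<Rightarrow> real^'d) \<Rightarrow> (nat \<Rightarrow> real)
    \<Rightarrow> (real^'d) \<times> (real^'d) \<Rightarrow> real" where
  "exp_loss n x y \<theta> = (1 / real n) * (\<Sum>i<n. exp (- y i * (eff_weight \<theta> \<bullet> x i)))"

definition reg_loss :: "real \<Rightarrow> nat \<Rightarrow> (nat \<Rightarrow> real^'d) \<Rightarrow> (nat \<Rightarrow> real)
    \<Rightarrow> (real^'d) \<times> (real^'d) \<Rightarrow> real" where
  "reg_loss lam n x y \<theta> = exp_loss n x y \<theta> + lam / 2 * (norm \<theta>)^2"

definition is_gradient_flow ::
  "(('a::real_inner) \<Rightarrow> real) \<Rightarrow> 'a \<Rightarrow> (real \<Rightarrow> 'a) \<Rightarrow> bool" where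
  "is_gradient_flow F \<theta>0 \<theta> \<longleftrightarrow> \<theta> 0 = \<theta>0 \<and>
     (\<forall>t\<ge>0. \<exists>g. (F has_derivative (\<lambda>h. g \<bullet> h)) (at (\<theta> t)) \<and>
                 (\<theta> has_vector_derivative (- g)) (at t within {0..}))"

definition margin :: "nat \<Rightarrow> (nat \<Rightarrow> real^'d) \<Rightarrow> (nat \<Rightarrow> real) \<Rightarrow> real^'d \<Rightarrow> real" where
  "margin n x y w = Min ((\<lambda>i. y i * (w \<bullet> x i)) ` {..<n})"

definition is_max_L2_margin_dir ::
  "nat \<Rightarrow> (nat \<Rightarrow> real^'d) \<Rightarrow> (nat \<Rightarrow> real) \<Rightarrow> real^'d \<Rightarrow> bool" where
  "is_max_L2_margin_dir n x y w \<longleftrightarrow> norm w = 1 \<and>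
     (\<forall>w'. norm w' = 1 \<longrightarrow> margin n x y w' \<le> margin n x y w)"

end

(*
  Write theta = (u, v). Along the gradient flow u_k v_k exp (2 lam t) is conserved, so with
  s = ln u - ln v the effective weight is 2 alpha^2 exp (-2 lam t) sinh s, and s solves
  s' = 4/n sum_i exp (-<w(t), z_i>) z_i, s(0) = 0, where z_i = y_i x_i.  At the stopping time
  T = (1 - c) ln alpha / lam the scale alpha^2 exp (-2 lam T) equals alpha^(2c), which is huge:
  the progress m = <s, w*> reaches sqrt (ln alpha) / alpha^(2c) before T but stays below
  O(ln alpha / alpha^(2c)), so s is small and sinh is linear up to a cubic error.  Meanwhile
  the optimality of w* lets the potential sum_k (cosh s_k - 1) grow no faster than m, up to
  errors; hence |s| <= (1 + delta) m, i.e. s and with it w(T) point in the direction w*,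
  with delta -> 0 as alpha -> infinity.
*)

theory Submission
  imports Defs "HOL-Real_Asymp.Real_Asymp"
begin

lemma has_real_derivative_nonneg_imp_le:
  fixes f f' :: "real \<Rightarrow> real"
  assumes "a \<le> b" "continuous_on {a..b} f"
    and "\<And>x. a < x \<Longrightarrow> x < b \<Longrightarrow> (f has_real_derivative f' x) (at x)"
    and "\<And>x. a < x \<Longrightarrow> x < b \<Longrightarrow> 0 \<le> f' x"
  shows "f a \<le> f b"
  using assms by (intro DERIV_nonneg_imp_increasing_open[OF assms(1)]) blast+

lemma abs_diff_le_if_abs_deriv_le:
  fixes f g f' g' :: "real \<Rightarrow> real"
  assumes "a \<le> b" "continuous_on {a..b} f" "continuous_on {a..b} g"
    and "\<And>x. a < x \<Longrightarrow> x < b \<Longrightarrow> (f has_real_derivative f' x) (at x)"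
    and "\<And>x. a < x \<Longrightarrow> x < b \<Longrightarrow> (g has_real_derivative g' x) (at x)"
    and "\<And>x. a < x \<Longrightarrow> x < b \<Longrightarrow> \<bar>f' x\<bar> \<le> g' x"
  shows "\<bar>f b - f a\<bar> \<le> g b - g a"
proof -
  have "g a - f a \<le> g b - f b"
  proof (rule has_real_derivative_nonneg_imp_le[where f = "\<lambda>x. g x - f x"
      and f' = "\<lambda>x. g' x - f' x"])
    show "0 \<le> g' x - f' x" if "a < x" "x < b" for x using assms(6)[OF that] by linarith
  qed (use assms in \<open>auto intro!: continuous_intros DERIV_diff\<close>)
  moreover have "g a + f a \<le> g b + f b"
  proof (rule has_real_derivative_nonneg_imp_le[where f = "\<lambda>x. g x + f x"
      and f' = "\<lambda>x. g' x + f' x"])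
    show "0 \<le> g' x + f' x" if "a < x" "x < b" for x using assms(6)[OF that] by linarith
  qed (use assms in \<open>auto intro!: continuous_intros DERIV_add\<close>)
  ultimately show ?thesis by (simp add: abs_le_iff)
qed

lemma deriv_le_exp_imp_exp_le:
  fixes f f' :: "real \<Rightarrow> real"
  assumes "a \<le> b" "0 \<le> \<kappa>" "continuous_on {a..b} f"
    and "\<And>x. a < x \<Longrightarrow> x < b \<Longrightarrow> (f has_real_derivative f' x) (at x)"
    and "\<And>x. a < x \<Longrightarrow> x < b \<Longrightarrow> f' x \<le> A * exp (- \<kappa> * f x)"
  shows "exp (\<kappa> * f b) \<le> exp (\<kappa> * f a) + \<kappa> * A * (b - a)"
proof -
  define G where "G u = \<kappa> * A * u - exp (\<kappa> * f u)" for u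
  have "G a \<le> G b"
  proof (rule has_real_derivative_nonneg_imp_le[where f = G and a = a and b = b
      and f' = "\<lambda>x. \<kappa> * A - \<kappa> * (f' x * exp (\<kappa> * f x))"])
    show "continuous_on {a..b} G" unfolding G_def by (intro continuous_intros assms(3))
    show "(G has_real_derivative \<kappa> * A - \<kappa> * (f' x * exp (\<kappa> * f x))) (at x)" if "a < x" "x < b" for x
      unfolding G_def using assms(4)[OF that] by (auto intro!: derivative_eq_intros simp: algebra_simps)
    show "0 \<le> \<kappa> * A - \<kappa> * (f' x * exp (\<kappa> * f x))" if "a < x" "x < b" for x
    proof -
      have "f' x * exp (\<kappa> * f x) \<le> A * exp (- \<kappa> * f x) * exp (\<kappa> * f x)"
        using assms(5)[OF that] by (intro mult_right_mono) auto
      also have "\<dots> = A" by (simp flip: exp_add)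
      finally show ?thesis using assms(2) by (simp add: mult_left_mono)
    qed
  qed (rule assms(1))
  then show ?thesis unfolding G_def by (simp add: algebra_simps)
qed

lemma deriv_ge_exp_imp_exp_ge:
  fixes f f' :: "real \<Rightarrow> real"
  assumes "a \<le> b" "0 \<le> \<kappa>" "continuous_on {a..b} f"
    and "\<And>x. a < x \<Longrightarrow> x < b \<Longrightarrow> (f has_real_derivative f' x) (at x)"
    and "\<And>x. a < x \<Longrightarrow> x < b \<Longrightarrow> B * exp (- \<kappa> * f x) \<le> f' x"
  shows "exp (\<kappa> * f a) + \<kappa> * B * (b - a) \<le> exp (\<kappa> * f b)"
proof -
  define H where "H u = exp (\<kappa> * f u) - \<kappa> * B * u" for u
  have "H a \<le> H b"
  proof (rule has_real_derivative_nonneg_imp_le[where f = H and a = a and b = b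
      and f' = "\<lambda>x. \<kappa> * (f' x * exp (\<kappa> * f x)) - \<kappa> * B"])
    show "continuous_on {a..b} H" unfolding H_def by (intro continuous_intros assms(3))
    show "(H has_real_derivative \<kappa> * (f' x * exp (\<kappa> * f x)) - \<kappa> * B) (at x)" if "a < x" "x < b" for x
      unfolding H_def using assms(4)[OF that] by (auto intro!: derivative_eq_intros simp: algebra_simps)
    show "0 \<le> \<kappa> * (f' x * exp (\<kappa> * f x)) - \<kappa> * B" if "a < x" "x < b" for x
    proof -
      have "B = B * exp (- \<kappa> * f x) * exp (\<kappa> * f x)" by (simp flip: exp_add)
      also have "\<dots> \<le> f' x * exp (\<kappa> * f x)"
        using assms(5)[OF that] by (intro mult_right_mono) auto
      finally show ?thesis using assms(2) by (simp add: mult_left_mono)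
    qed
  qed (rule assms(1))
  then show ?thesis unfolding H_def by (simp add: algebra_simps)
qed

lemma pos_if_continuous_nonzero:
  fixes f :: "real \<Rightarrow> real"
  assumes "0 \<le> t" "continuous_on {0..t} f" "0 < f 0" "\<And>\<tau>. 0 \<le> \<tau> \<Longrightarrow> \<tau> \<le> t \<Longrightarrow> f \<tau> \<noteq> 0"
  shows "0 < f t"
proof (rule ccontr)
  assume "\<not> 0 < f t"
  then obtain \<tau> where "0 \<le> \<tau>" "\<tau> \<le> t" "f \<tau> = 0"
    using IVT2'[of f t 0 0] assms(1-3) by force
  then show False using assms(4) by blast
qed

lemma eventually_le_if_tendsto_less:
  fixes f :: "'a \<Rightarrow> real"
  assumes "(f \<longlongrightarrow> l) F" "l < a"
  shows "eventually (\<lambda>x. f x \<le> a) F"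
  using order_tendstoD(2)[OF assms] by (rule eventually_mono) simp

lemma bigtheta_powr_bounds:
  fixes lam :: "real \<Rightarrow> real"
  assumes "lam \<in> \<Theta>[at_top](\<lambda>\<alpha>. \<alpha> powr (- p))" "\<forall>\<alpha>>0. 0 < lam \<alpha>"
  obtains k1 k2 where "0 < k1" "0 < k2"
    "eventually (\<lambda>\<alpha>. k1 * \<alpha> powr (- p) \<le> lam \<alpha>) at_top"
    "eventually (\<lambda>\<alpha>. lam \<alpha> \<le> k2 * \<alpha> powr (- p)) at_top"
proof -
  obtain k1 where "0 < k1" and k1: "eventually (\<lambda>\<alpha>. k1 * norm (\<alpha> powr (- p)) \<le> norm (lam \<alpha>)) at_top"
    using landau_omega.bigE[OF bigthetaD2[OF assms(1)]] by blast
  obtain k2 where "0 < k2" and k2: "eventually (\<lambda>\<alpha>. norm (lam \<alpha>) \<le> k2 * norm (\<alpha> powr (- p))) at_top"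
    using landau_o.bigE[OF bigthetaD1[OF assms(1)]] by blast
  have "eventually (\<lambda>\<alpha>. k1 * \<alpha> powr (- p) \<le> lam \<alpha>) at_top"
    using k1 eventually_gt_at_top[of 0] by eventually_elim (use assms(2) in auto)
  moreover have "eventually (\<lambda>\<alpha>. lam \<alpha> \<le> k2 * \<alpha> powr (- p)) at_top"
    using k2 eventually_gt_at_top[of 0] by eventually_elim (use assms(2) in auto)
  ultimately show ?thesis using that \<open>0 < k1\<close> \<open>0 < k2\<close> by blast
qed

lemma one_minus_mult_le_if_le_one_plus_mult:
  fixes a b \<delta> :: real
  assumes "a \<le> (1 + \<delta>) * b" "0 \<le> a" "0 \<le> b"
  shows "(1 - \<delta>) * a \<le> b"
proof (cases "\<delta> \<le> 1")
  case True
  have "(1 - \<delta>) * a \<le> (1 - \<delta>) * ((1 + \<delta>) * b)" using assms(1) True by (intro mult_left_mono) auto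
  also have "\<dots> = b - \<delta>^2 * b" by (simp add: algebra_simps power2_eq_square)
  finally show ?thesis using assms(3) by (smt (verit) zero_le_power2 mult_nonneg_nonneg)
next
  case False
  then show ?thesis using assms(2,3) by (smt (verit) mult_nonpos_nonneg)
qed

lemma mult_exp_minus_le: "x * exp (- x) \<le> exp (- 1 :: real)"
proof -
  have "x * exp (- x) \<le> exp (x - 1) * exp (- x)"
    using exp_ge_add_one_self[of "x - 1"] by (intro mult_right_mono) auto
  also have "\<dots> = exp (- 1)" by (simp flip: exp_add)
  finally show ?thesis .
qed

lemma sum_exp_minus_mult_le:
  fixes q :: "nat \<Rightarrow> real"
  assumes "n > 0"
  shows "(\<Sum>i<n. exp (- q i) * q i) \<le> (\<Sum>i<n. exp (- q i)) * (Min (q ` {..<n}) + real n * exp (- 1))"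
proof -
  define M where "M = Min (q ` {..<n})"
  have fin: "finite (q ` {..<n})" "q ` {..<n} \<noteq> {}" using assms by auto
  obtain j where j: "j < n" "M = q j" using Min_in[OF fin] unfolding M_def by auto
  have "exp (- M) \<le> (\<Sum>i<n. exp (- q i))"
    unfolding j(2) by (rule member_le_sum) (use j in auto)
  then have "(\<Sum>i<n. exp (- M) * exp (- 1)) \<le> real n * exp (- 1) * (\<Sum>i<n. exp (- q i))"
    by (simp add: mult_left_mono mult.assoc)
  moreover have "(\<Sum>i<n. exp (- q i) * (q i - M)) \<le> (\<Sum>i<n. exp (- M) * exp (- 1))"
  proof (intro sum_mono)
    fix i
    have "exp (- q i) * (q i - M) = exp (- M) * ((q i - M) * exp (- (q i - M)))"
      by (simp add: algebra_simps flip: exp_add)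
    also have "\<dots> \<le> exp (- M) * exp (- 1)" by (intro mult_left_mono mult_exp_minus_le) auto
    finally show "exp (- q i) * (q i - M) \<le> exp (- M) * exp (- 1)" .
  qed
  ultimately have "(\<Sum>i<n. exp (- q i) * (q i - M)) \<le> real n * exp (- 1) * (\<Sum>i<n. exp (- q i))"
    by linarith
  then show ?thesis
    unfolding M_def[symmetric] by (simp add: algebra_simps sum_subtractf sum_distrib_left sum_distrib_right sum.distrib)
qed

lemma sum_power2_le_power2_sum:
  fixes a :: "'a \<Rightarrow> real"
  assumes "finite A" "\<And>k. k \<in> A \<Longrightarrow> 0 \<le> a k"
  shows "(\<Sum>k\<in>A. (a k)^2) \<le> (\<Sum>k\<in>A. a k)^2"
proof -
  have "(\<Sum>k\<in>A. (a k)^2) \<le> (\<Sum>k\<in>A. a k * (\<Sum>j\<in>A. a j))"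
  proof (intro sum_mono)
    fix k assume k: "k \<in> A"
    have "a k \<le> (\<Sum>j\<in>A. a j)" using assms k by (intro member_le_sum) auto
    then show "(a k)^2 \<le> a k * (\<Sum>j\<in>A. a j)"
      using assms(2)[OF k] by (simp add: power2_eq_square mult_left_mono)
  qed
  also have "\<dots> = (\<Sum>k\<in>A. a k)^2" by (simp add: power2_eq_square sum_distrib_right)
  finally show ?thesis .
qed

section \<open>Hyperbolic estimates\<close>

lemma sinh_ge_self: "0 \<le> x \<Longrightarrow> x \<le> sinh (x::real)"
  using real_le_x_sinh by (simp add: sinh_field_def exp_minus)

lemma cosh_le_2: "\<bar>x\<bar> \<le> 1 \<Longrightarrow> cosh (x::real) \<le> 2"
proof -
  assume "\<bar>x\<bar> \<le> 1"
  then have "cosh x \<le> cosh 1"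
    by (metis abs_ge_zero cosh_real_abs cosh_real_nonneg_le_iff zero_le_one)
  also have "cosh 1 \<le> (exp 1 + 1) / (2::real)"
    unfolding cosh_field_def by (intro divide_right_mono add_left_mono) auto
  also have "\<dots> \<le> 2" using exp_le by simp
  finally show ?thesis .
qed

lemma cosh_minus_one_ge_sq: "x^2 / 2 \<le> cosh (x::real) - 1"
proof -
  have "cosh 0 - 1 - 0^2/2 \<le> cosh \<bar>x\<bar> - 1 - \<bar>x\<bar>^2/2"
    by (rule has_real_derivative_nonneg_imp_le[where f = "\<lambda>x. cosh x - 1 - x^2/2"
        and f' = "\<lambda>x. sinh x - x"])
      (auto intro!: derivative_eq_intros continuous_intros simp: sinh_ge_self)
  then show ?thesis by simp
qed

lemma cosh_minus_one_le_sq: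
  assumes "\<bar>x\<bar> \<le> 1" shows "cosh (x::real) - 1 \<le> x^2"
proof -
  have sinh_le: "sinh y \<le> 2 * y" if "0 \<le> y" "y \<le> 1" for y :: real
  proof -
    have "2 * 0 - sinh 0 \<le> 2 * y - sinh y"
    proof (rule has_real_derivative_nonneg_imp_le[where f = "\<lambda>x. 2 * x - sinh x"
        and f' = "\<lambda>x. 2 - cosh x"])
      show "0 \<le> 2 - cosh z" if "0 < z" "z < y" for z
        using cosh_le_2[of z] that \<open>y \<le> 1\<close> by simp
    qed (use that in \<open>auto intro!: derivative_eq_intros continuous_intros\<close>)
    then show ?thesis by simp
  qed
  have "0^2 - cosh 0 \<le> \<bar>x\<bar>^2 - cosh \<bar>x\<bar>"
  proof (rule has_real_derivative_nonneg_imp_le[where f = "\<lambda>x. x^2 - cosh x"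
      and f' = "\<lambda>x. 2 * x - sinh x"])
    show "0 \<le> 2 * z - sinh z" if "0 < z" "z < \<bar>x\<bar>" for z
      using sinh_le[of z] that assms by simp
  qed (auto intro!: derivative_eq_intros continuous_intros)
  then show ?thesis by simp
qed

lemma abs_sinh_minus_self_le:
  assumes "\<bar>x\<bar> \<le> 1" shows "\<bar>sinh x - x\<bar> \<le> \<bar>x::real\<bar>^3"
proof -
  have "0^3 - sinh 0 + 0 \<le> \<bar>x\<bar>^3 - sinh \<bar>x\<bar> + \<bar>x\<bar>"
  proof (rule has_real_derivative_nonneg_imp_le[where f = "\<lambda>x. x^3 - sinh x + x"
      and f' = "\<lambda>x. 3 * x^2 - cosh x + 1"])
    show "0 \<le> 3 * y^2 - cosh y + 1" if "0 < y" "y < \<bar>x\<bar>" for y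
      using cosh_minus_one_le_sq[of y] zero_le_power2[of y] that assms by linarith
  qed (auto intro!: derivative_eq_intros continuous_intros)
  then have "sinh \<bar>x\<bar> - \<bar>x\<bar> \<le> \<bar>x\<bar>^3" by simp
  moreover have "\<bar>sinh x - x\<bar> = sinh \<bar>x\<bar> - \<bar>x\<bar>"
  proof (cases "0 \<le> x")
    case True
    then show ?thesis using sinh_ge_self[of x] by (simp del: sinh_real_abs)
  next
    case False
    then have "\<bar>x\<bar> = - x" by simp
    then show ?thesis using sinh_ge_self[of "- x"] False by (simp del: sinh_real_abs add: abs_of_nonpos)
  qed
  ultimately show ?thesis by linarith
qed

lemma sinh_ln_diff:
  fixes a b :: real
  assumes "0 < a" "0 < b"
  shows "2 * (a * b) * sinh (ln a - ln b) = a^2 - b^2"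
proof -
  have "exp (ln a - ln b) = a / b" "exp (- (ln a - ln b)) = b / a"
    using assms by (simp_all add: exp_diff)
  then have "2 * (a * b) * sinh (ln a - ln b) = (a * b) * (a / b - b / a)"
    unfolding sinh_def by simp
  also have "\<dots> = a^2 - b^2" using assms by (simp add: field_simps power2_eq_square)
  finally show ?thesis .
qed

definition sinh_vec :: "real^'d \<Rightarrow> real^'d" where
  "sinh_vec s = (\<chi> k. sinh (s $ k))"

definition cosh_potential :: "real^'d \<Rightarrow> real" where
  "cosh_potential s = (\<Sum>k\<in>UNIV. cosh (s $ k) - 1)"

lemma power2_norm_vec: "(norm (s :: real^'d))^2 = (\<Sum>k\<in>UNIV. (s $ k)^2)"
  unfolding power2_norm_eq_inner inner_vec_def by (simp add: power2_eq_square)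

lemma cosh_potential_nonneg: "0 \<le> cosh_potential s"
  unfolding cosh_potential_def by (intro sum_nonneg) (simp add: cosh_real_ge_1)

lemma power2_norm_le_cosh_potential: "(norm s)^2 \<le> 2 * cosh_potential s"
  unfolding power2_norm_vec cosh_potential_def sum_distrib_left
proof (intro sum_mono)
  show "(s $ k)^2 \<le> 2 * (cosh (s $ k) - 1)" for k
    using cosh_minus_one_ge_sq[of "s $ k"] by (simp add: field_simps)
qed

lemma cosh_potential_le_power2_norm:
  assumes "norm s \<le> 1" shows "cosh_potential s \<le> (norm s)^2"
  unfolding power2_norm_vec cosh_potential_def
  by (intro sum_mono cosh_minus_one_le_sq) (use assms component_le_norm_cart order_trans in blast)

lemma power2_norm_sinh_vec_le:
  "(norm (sinh_vec s))^2 \<le> 2 * cosh_potential s + (cosh_potential s)^2"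
proof -
  have sinh_sq: "(sinh x)^2 = (cosh x - 1)^2 + 2 * (cosh x - 1)" for x :: real
    using cosh_square_eq[of x] by (simp add: power2_eq_square algebra_simps)
  have "(norm (sinh_vec s))^2 = (\<Sum>k\<in>UNIV. (cosh (s $ k) - 1)^2) + 2 * cosh_potential s"
    by (simp add: power2_norm_vec sinh_vec_def sinh_sq sum.distrib cosh_potential_def sum_distrib_left)
  also have "(\<Sum>k\<in>UNIV. (cosh (s $ k) - 1)^2) \<le> (cosh_potential s)^2"
    unfolding cosh_potential_def by (rule sum_power2_le_power2_sum) (auto simp: cosh_real_ge_1)
  finally show ?thesis by simp
qed

lemma norm_sinh_vec_le_cosh_potential:
  fixes s :: "real^'d"
  defines "V \<equiv> sqrt (2 * cosh_potential s)"
  shows "norm (sinh_vec s) \<le> V * (1 + V^2 / 8)"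
proof (rule power2_le_imp_le)
  have V2: "V^2 = 2 * cosh_potential s" unfolding V_def using cosh_potential_nonneg[of s] by simp
  have V0: "0 \<le> V" unfolding V_def using cosh_potential_nonneg[of s] by simp
  have "(norm (sinh_vec s))^2 \<le> V^2 + (V^2)^2 / 4"
    using power2_norm_sinh_vec_le[of s] unfolding V2 by (simp add: power2_eq_square)
  also have "\<dots> \<le> (V * (1 + V^2 / 8))^2"
    using V0 by (simp add: power2_eq_square algebra_simps)
  finally show "(norm (sinh_vec s))^2 \<le> (V * (1 + V^2 / 8))^2" .
  show "0 \<le> V * (1 + V^2 / 8)" using V0 by simp
qed

lemma norm_sinh_vec_minus_le:
  assumes "norm s \<le> 1" shows "norm (sinh_vec s - s) \<le> (norm s)^3"
proof (rule power2_le_imp_le)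
  have "(sinh (s $ k) - s $ k)^2 \<le> (s $ k)^2 * (norm s)^4" for k
  proof -
    have c: "\<bar>s $ k\<bar> \<le> norm s" by (rule component_le_norm_cart)
    have "\<bar>sinh (s $ k) - s $ k\<bar> \<le> \<bar>s $ k\<bar> * \<bar>s $ k\<bar>^2"
      using abs_sinh_minus_self_le[of "s $ k"] c assms by (simp add: power3_eq_cube power2_eq_square)
    also have "\<dots> \<le> \<bar>s $ k\<bar> * (norm s)^2"
      using c by (intro mult_left_mono power_mono) auto
    finally have "\<bar>sinh (s $ k) - s $ k\<bar>^2 \<le> (\<bar>s $ k\<bar> * (norm s)^2)^2"
      by (intro power_mono) auto
    then show ?thesis by (simp add: power_mult_distrib flip: power_mult)
  qed
  then have "(norm (sinh_vec s - s))^2 \<le> (\<Sum>k\<in>UNIV. (s $ k)^2 * (norm s)^4)"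
    unfolding power2_norm_vec sinh_vec_def by (intro sum_mono) simp
  also have "\<dots> = (norm s)^2 * (norm s)^4"
    by (simp add: power2_norm_vec sum_distrib_right)
  also have "\<dots> = ((norm s)^3)^2"
    by (simp flip: power_add power_mult)
  finally show "(norm (sinh_vec s - s))^2 \<le> ((norm s)^3)^2" .
qed simp

lemma norm_sinh_vec_le:
  assumes "norm s \<le> 1" shows "norm (sinh_vec s) \<le> 2 * norm s"
proof -
  have "(norm s)^3 = norm s * (norm s)^2" by (simp add: power3_eq_cube power2_eq_square)
  also have "\<dots> \<le> norm s" using assms by (intro mult_left_le power_le_one) auto
  finally have "(norm s)^3 \<le> norm s" .
  then show ?thesis
    using norm_sinh_vec_minus_le[OF assms] norm_triangle_sub[of "sinh_vec s" s] by simp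
qed

section \<open>Directions of almost aligned vectors\<close>

lemma norm_sgn_minus_le_if_aligned:
  fixes s w :: "'a::real_inner"
  assumes "norm w = 1" "s \<noteq> 0" "0 \<le> \<delta>" "(1 - \<delta>) * norm s \<le> s \<bullet> w"
  shows "norm (sgn s - w) \<le> sqrt (2 * \<delta>)"
proof -
  have "(norm (sgn s - w))^2 = sgn s \<bullet> sgn s - 2 * (sgn s \<bullet> w) + w \<bullet> w"
    unfolding power2_norm_eq_inner by (simp add: inner_diff_left inner_diff_right inner_commute)
  also have "\<dots> = 2 - 2 * (s \<bullet> w) / norm s"
    using assms(1,2) by (simp add: norm_sgn sgn_div_norm divide_inverse mult.commute flip: power2_norm_eq_inner)
  also have "\<dots> \<le> 2 * \<delta>" using assms by (simp add: field_simps)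
  finally show ?thesis by (simp add: real_le_rsqrt)
qed

lemma inner_ge_if_aligned:
  fixes s w z :: "'a::real_inner"
  assumes "norm w = 1" "0 \<le> \<delta>" "(1 - \<delta>) * norm s \<le> s \<bullet> w"
  shows "norm s * (w \<bullet> z - norm z * sqrt (2 * \<delta>)) \<le> s \<bullet> z"
proof (cases "s = 0")
  case False
  have "- ((sgn s - w) \<bullet> z) \<le> norm (sgn s - w) * norm z"
    by (metis abs_ge_minus_self Cauchy_Schwarz_ineq2 order_trans)
  also have "\<dots> \<le> sqrt (2 * \<delta>) * norm z"
    using norm_sgn_minus_le_if_aligned[OF assms(1) False assms(2,3)] by (intro mult_right_mono) auto
  finally have "w \<bullet> z - norm z * sqrt (2 * \<delta>) \<le> sgn s \<bullet> z"
    by (simp add: inner_diff_left mult.commute)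
  then have "norm s * (w \<bullet> z - norm z * sqrt (2 * \<delta>)) \<le> norm s * (sgn s \<bullet> z)"
    by (intro mult_left_mono) auto
  also have "norm s * (sgn s \<bullet> z) = s \<bullet> z" using False by (simp add: sgn_div_norm)
  finally show ?thesis .
qed simp

lemma norm_sgn_diff_le:
  fixes a b :: "'a::real_normed_vector"
  assumes "b \<noteq> 0"
  shows "norm (sgn a - sgn b) \<le> 2 * norm (a - b) / norm b"
proof -
  have nb: "norm b > 0" using assms by simp
  have "norm (sgn a - sgn b) \<le> norm (sgn a - a /\<^sub>R norm b) + norm (a /\<^sub>R norm b - sgn b)"
    by (rule norm_diff_triangle_le[OF order_refl order_refl])
  also have "norm (sgn a - a /\<^sub>R norm b) \<le> norm (a - b) / norm b"
  proof (cases "a = 0")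
    case False
    have "norm (sgn a - a /\<^sub>R norm b) = \<bar>inverse (norm a) - inverse (norm b)\<bar> * norm a"
      by (simp add: sgn_div_norm flip: scaleR_diff_left)
    also have "\<dots> = \<bar>norm b - norm a\<bar> / norm b"
      using False nb by (simp add: field_simps abs_div)
    also have "\<dots> \<le> norm (a - b) / norm b"
      using nb by (intro divide_right_mono) (auto simp: norm_triangle_ineq3 abs_minus_commute)
    finally show ?thesis .
  qed simp
  also have "norm (a /\<^sub>R norm b - sgn b) = norm (a - b) / norm b"
    by (simp add: sgn_div_norm divide_inverse mult.commute flip: scaleR_diff_right)
  finally show ?thesis by simp
qed

lemma norm_sgn_sinh_vec_minus_le_if_aligned:
  fixes s w :: "real^'d"
  assumes "norm w = 1" "s \<noteq> 0" "norm s \<le> 1" "0 \<le> \<delta>" "(1 - \<delta>) * norm s \<le> s \<bullet> w"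
  shows "norm (sgn (sinh_vec s) - w) \<le> 2 * (norm s)^2 + sqrt (2 * \<delta>)"
proof -
  have ns: "norm s > 0" using assms by simp
  have "norm (sgn (sinh_vec s) - w) \<le> norm (sgn (sinh_vec s) - sgn s) + norm (sgn s - w)"
    by (rule norm_diff_triangle_le[OF order_refl order_refl])
  also have "norm (sgn (sinh_vec s) - sgn s) \<le> 2 * norm (sinh_vec s - s) / norm s"
    using assms(2) by (rule norm_sgn_diff_le)
  also have "\<dots> \<le> 2 * (norm s)^3 / norm s"
    using norm_sinh_vec_minus_le[OF assms(3)] ns by (intro divide_right_mono) auto
  also have "\<dots> = 2 * (norm s)^2" using ns by (simp add: power3_eq_cube power2_eq_square)
  also have "norm (sgn s - w) \<le> sqrt (2 * \<delta>)"
    using norm_sgn_minus_le_if_aligned[OF assms(1,2,4,5)] .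
  finally show ?thesis by simp
qed

section \<open>The flow in logarithmic coordinates\<close>

locale max_margin_data =
  fixes n :: nat and z :: "nat \<Rightarrow> real^'d" and w :: "real^'d" and \<gamma> Z :: real
  assumes n_pos: "0 < n"
    and norm_w: "norm w = 1"
    and margin_pos: "0 < \<gamma>"
    and margin_le_inner: "\<And>i. i < n \<Longrightarrow> \<gamma> \<le> w \<bullet> z i"
    and Min_inner_le: "\<And>v. Min ((\<lambda>i. v \<bullet> z i) ` {..<n}) \<le> \<gamma> * norm v"
    and norm_z_le: "\<And>i. i < n \<Longrightarrow> norm (z i) \<le> Z"
begin

definition Cs :: real where
  "Cs = real CARD('d) * Z / \<gamma>"

definition softmin_gap :: "real \<Rightarrow> real" where
  "softmin_gap b = real n * exp (- 1) / (2 * \<gamma> * b)"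

definition align_err :: "real \<Rightarrow> real \<Rightarrow> real \<Rightarrow> real \<Rightarrow> real" where
  "align_err b a1 a2 mmax = 2 * Cs * a1 / a2 + (Cs * mmax)^2 / 4 + softmin_gap b * (ln mmax - ln a1) / a2"

lemma Z_pos: "0 < Z"
proof -
  have "\<gamma> \<le> w \<bullet> z 0" using margin_le_inner n_pos by simp
  also have "\<dots> \<le> norm w * norm (z 0)" by (rule norm_cauchy_schwarz)
  also have "\<dots> \<le> Z" using norm_z_le[of 0] n_pos norm_w by simp
  finally show ?thesis using margin_pos by simp
qed

lemma Cs_pos: "0 < Cs"
  unfolding Cs_def using Z_pos margin_pos by simp

lemma softmin_gap_nonneg: "0 < b \<Longrightarrow> 0 \<le> softmin_gap b"
  unfolding softmin_gap_def using margin_pos by simp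

lemma align_err_nonneg:
  assumes "0 < b" "0 < a1" "a1 \<le> mmax" "0 < a2"
  shows "0 \<le> align_err b a1 a2 mmax"
  unfolding align_err_def using assms Cs_pos softmin_gap_nonneg[of b] by simp

lemma abs_component_z_le: "i < n \<Longrightarrow> \<bar>z i $ k\<bar> \<le> Z"
  using component_le_norm_cart[of "z i" k] norm_z_le[of i] by simp

end

definition flow_scale :: "real \<Rightarrow> real \<Rightarrow> real \<Rightarrow> real" where
  "flow_scale \<alpha> lam t = \<alpha>^2 * exp (- 2 * lam * t)"

(* s stands for ln u - ln v; gradient_flow_log_ratio shows that the effective weight is
   2 * flow_scale alpha lam t *R sinh_vec (s t). *)
locale sinh_flow = max_margin_data +
  fixes lam \<alpha> :: real and s :: "real \<Rightarrow> real^'d"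
  assumes lam_pos: "0 < lam" and \<alpha>_pos: "0 < \<alpha>"
    and s_0: "s 0 = 0"
    and continuous_s: "continuous_on {0..} s"
    and s_deriv: "\<And>t k. 0 < t \<Longrightarrow> ((\<lambda>t. s t $ k) has_real_derivative
      4 / real n * (\<Sum>i<n. exp (- (2 * flow_scale \<alpha> lam t * (sinh_vec (s t) \<bullet> z i))) * z i $ k)) (at t)"
begin

abbreviation \<beta> :: "real \<Rightarrow> real" where
  "\<beta> \<equiv> flow_scale \<alpha> lam"

definition q :: "real \<Rightarrow> nat \<Rightarrow> real" where
  "q t i = 2 * \<beta> t * (sinh_vec (s t) \<bullet> z i)"

definition loss_sum :: "real \<Rightarrow> real" where
  "loss_sum t = (\<Sum>i<n. exp (- q t i))"

definition m :: "real \<Rightarrow> real" where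
  "m t = s t \<bullet> w"

definition dm :: "real \<Rightarrow> real" where
  "dm t = 4 / real n * (\<Sum>i<n. exp (- q t i) * (z i \<bullet> w))"

definition P :: "real \<Rightarrow> real" where
  "P t = cosh_potential (s t)"

definition dP :: "real \<Rightarrow> real" where
  "dP t = 4 / real n * (\<Sum>i<n. exp (- q t i) * (sinh_vec (s t) \<bullet> z i))"

definition V :: "real \<Rightarrow> real" where
  "V t = sqrt (2 * P t)"

lemma s_component_deriv:
  "0 < t \<Longrightarrow> ((\<lambda>t. s t $ k) has_real_derivative 4 / real n * (\<Sum>i<n. exp (- q t i) * z i $ k)) (at t)"
  using s_deriv unfolding q_def by simp

lemma \<beta>_pos: "0 < \<beta> t"
  using \<alpha>_pos by (simp add: flow_scale_def)

lemma \<beta>_antimono: "t \<le> T \<Longrightarrow> \<beta> T \<le> \<beta> t"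
  unfolding flow_scale_def using lam_pos by (intro mult_left_mono) auto

lemma \<beta>_le_near_end: "T - 1 / lam \<le> t \<Longrightarrow> \<beta> t \<le> exp 2 * \<beta> T"
proof -
  assume "T - 1 / lam \<le> t"
  then have "lam * T - 1 \<le> lam * t"
    using lam_pos mult_left_mono[of "T - 1 / lam" t lam] by (simp add: algebra_simps)
  then have "exp (- 2 * lam * t) \<le> exp 2 * exp (- 2 * lam * T)"
    by (simp flip: exp_add)
  then show ?thesis
    unfolding flow_scale_def using \<alpha>_pos by (simp add: mult_left_mono mult.left_commute)
qed

lemma m_deriv: "0 < t \<Longrightarrow> (m has_real_derivative dm t) (at t)"
proof -
  assume t: "0 < t"
  have "((\<lambda>t. \<Sum>k\<in>UNIV. s t $ k * w $ k) has_real_derivative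
        (\<Sum>k\<in>UNIV. 4 / real n * (\<Sum>i<n. exp (- q t i) * z i $ k) * w $ k)) (at t)"
    by (intro DERIV_sum DERIV_cmult_right s_component_deriv[OF t])
  also have "(\<Sum>k\<in>UNIV. 4 / real n * (\<Sum>i<n. exp (- q t i) * z i $ k) * w $ k) = dm t"
    unfolding dm_def inner_vec_def
    by (simp add: sum_distrib_left sum_distrib_right mult_ac sum.swap[of _ UNIV])
  finally show ?thesis by (simp add: m_def[abs_def] inner_vec_def)
qed

lemma P_deriv: "0 < t \<Longrightarrow> (P has_real_derivative dP t) (at t)"
proof -
  assume t: "0 < t"
  have "((\<lambda>t. \<Sum>k\<in>UNIV. cosh (s t $ k) - 1) has_real_derivative
        (\<Sum>k\<in>UNIV. sinh (s t $ k) * (4 / real n * (\<Sum>i<n. exp (- q t i) * z i $ k)))) (at t)"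
    by (intro DERIV_sum DERIV_diff[where E = 0, simplified] has_field_derivative_cosh
        s_component_deriv[OF t] DERIV_const)
  also have "(\<Sum>k\<in>UNIV. sinh (s t $ k) * (4 / real n * (\<Sum>i<n. exp (- q t i) * z i $ k))) = dP t"
    unfolding dP_def inner_vec_def sinh_vec_def
    by (simp add: sum_distrib_left sum_distrib_right mult_ac sum.swap[of _ UNIV])
  finally show ?thesis by (simp add: P_def[abs_def] cosh_potential_def)
qed

lemma continuous_m: "continuous_on {0..} m"
  unfolding m_def by (intro continuous_intros continuous_s)

lemma continuous_on_m: "0 \<le> a \<Longrightarrow> continuous_on {a..b} m"
  by (rule continuous_on_subset[OF continuous_m]) auto

lemma m_0: "m 0 = 0"
  by (simp add: m_def s_0)

lemma loss_sum_pos: "0 < loss_sum t"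
  unfolding loss_sum_def using n_pos by (intro sum_pos) auto

lemma dm_ge_loss_sum: "4 * \<gamma> / real n * loss_sum t \<le> dm t"
proof -
  have "(\<Sum>i<n. exp (- q t i) * \<gamma>) \<le> (\<Sum>i<n. exp (- q t i) * (z i \<bullet> w))"
    by (intro sum_mono mult_left_mono) (auto simp: margin_le_inner inner_commute)
  then have "4 / real n * (\<Sum>i<n. exp (- q t i) * \<gamma>) \<le> dm t"
    unfolding dm_def by (intro mult_left_mono) auto
  then show ?thesis unfolding loss_sum_def by (simp add: sum_distrib_left[symmetric] mult_ac)
qed

lemma dm_le_loss_sum: "dm t \<le> 4 * Z / real n * loss_sum t"
proof -
  have "z i \<bullet> w \<le> Z" if "i < n" for i
    using norm_cauchy_schwarz[of "z i" w] norm_z_le[OF that] norm_w by simp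
  then have "(\<Sum>i<n. exp (- q t i) * (z i \<bullet> w)) \<le> (\<Sum>i<n. exp (- q t i) * Z)"
    by (intro sum_mono mult_left_mono) auto
  then have "dm t \<le> 4 / real n * (\<Sum>i<n. exp (- q t i) * Z)"
    unfolding dm_def by (intro mult_left_mono) auto
  then show ?thesis unfolding loss_sum_def by (simp add: sum_distrib_left[symmetric] mult_ac)
qed

lemma dm_pos: "0 < dm t"
  using dm_ge_loss_sum[of t] loss_sum_pos[of t] margin_pos n_pos
  by (smt (verit) divide_pos_pos mult_pos_pos of_nat_0_less_iff)

lemma m_mono: "0 \<le> a \<Longrightarrow> a \<le> b \<Longrightarrow> m a \<le> m b"
  by (rule has_real_derivative_nonneg_imp_le[where f' = dm])
    (auto intro: continuous_on_m m_deriv less_imp_le dm_pos)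

lemma m_pos: "0 < t \<Longrightarrow> 0 < m t"
  using DERIV_pos_imp_increasing_open[of 0 t m] continuous_on_m[of 0 t] m_deriv dm_pos m_0 by force

lemma m_nonneg: "0 \<le> t \<Longrightarrow> 0 \<le> m t"
  using m_mono[of 0 t] m_0 by simp

lemma abs_s_component_le: "0 \<le> t \<Longrightarrow> \<bar>s t $ k\<bar> \<le> Z / \<gamma> * m t"
proof -
  assume t: "0 \<le> t"
  define D where "D x = 4 / real n * (\<Sum>i<n. exp (- q x i) * z i $ k)" for x
  have "\<bar>s t $ k - s 0 $ k\<bar> \<le> Z / \<gamma> * m t - Z / \<gamma> * m 0"
  proof (rule abs_diff_le_if_abs_deriv_le[where f' = D and g' = "\<lambda>x. Z / \<gamma> * dm x"])
    show "continuous_on {0..t} (\<lambda>t. s t $ k)"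
      by (intro continuous_intros continuous_on_subset[OF continuous_s]) auto
    show "continuous_on {0..t} (\<lambda>x. Z / \<gamma> * m x)"
      by (intro continuous_intros continuous_on_m) auto
    show "((\<lambda>t. s t $ k) has_real_derivative D x) (at x)" if "0 < x" for x
      unfolding D_def using that by (rule s_component_deriv)
    show "((\<lambda>x. Z / \<gamma> * m x) has_real_derivative Z / \<gamma> * dm x) (at x)" if "0 < x" for x
      using that by (intro DERIV_cmult m_deriv)
    show "\<bar>D x\<bar> \<le> Z / \<gamma> * dm x" for x
    proof -
      have "\<bar>\<Sum>i<n. exp (- q x i) * z i $ k\<bar> \<le> Z * loss_sum x"
        unfolding loss_sum_def sum_distrib_left
        by (rule order_trans[OF sum_abs]) (auto intro!: sum_mono simp: abs_mult abs_component_z_le)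
      then have "\<bar>D x\<bar> \<le> 4 / real n * (Z * loss_sum x)"
        unfolding D_def by (simp add: abs_mult) (intro divide_right_mono mult_left_mono; simp)
      also have "\<dots> = Z / \<gamma> * (4 * \<gamma> / real n * loss_sum x)"
        using margin_pos by simp
      also have "\<dots> \<le> Z / \<gamma> * dm x"
        using Z_pos margin_pos by (intro mult_left_mono dm_ge_loss_sum) auto
      finally show ?thesis .
    qed
  qed (use t in auto)
  then show ?thesis by (simp add: s_0 m_0)
qed

lemma norm_s_le: "0 \<le> t \<Longrightarrow> norm (s t) \<le> Cs * m t"
proof -
  assume t: "0 \<le> t"
  have "norm (s t) \<le> (\<Sum>k\<in>UNIV. \<bar>s t $ k\<bar>)" by (rule norm_le_l1_cart)
  also have "\<dots> \<le> (\<Sum>k\<in>(UNIV::'d set). Z / \<gamma> * m t)" by (intro sum_mono abs_s_component_le t)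
  also have "\<dots> = Cs * m t" by (simp add: Cs_def)
  finally show ?thesis .
qed

lemma m_le_norm_s: "m t \<le> norm (s t)"
  unfolding m_def using norm_cauchy_schwarz[of "s t" w] norm_w by simp

lemma dP_le: "dP t \<le> dm t * (norm (sinh_vec (s t)) + softmin_gap (\<beta> t))"
proof -
  have b: "0 < \<beta> t" by (rule \<beta>_pos)
  have dP_eq: "dP t = 2 / (real n * \<beta> t) * (\<Sum>i<n. exp (- q t i) * q t i)"
    unfolding dP_def q_def using b by (simp add: sum_distrib_left field_simps)
  have "Min (q t ` {..<n}) \<le> \<gamma> * (2 * \<beta> t * norm (sinh_vec (s t)))"
    using Min_inner_le[of "(2 * \<beta> t) *\<^sub>R sinh_vec (s t)"] b by (simp add: q_def)
  then have "(\<Sum>i<n. exp (- q t i) * q t i)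
      \<le> loss_sum t * (\<gamma> * (2 * \<beta> t * norm (sinh_vec (s t))) + real n * exp (- 1))"
    using sum_exp_minus_mult_le[OF n_pos, of "q t"] loss_sum_pos[of t]
    unfolding loss_sum_def by (smt (verit) mult_left_mono)
  then have "dP t \<le> 2 / (real n * \<beta> t) * (loss_sum t * (\<gamma> * (2 * \<beta> t * norm (sinh_vec (s t))) + real n * exp (- 1)))"
    unfolding dP_eq using b n_pos by (intro mult_left_mono) auto
  also have "\<dots> = 4 * \<gamma> / real n * loss_sum t * (norm (sinh_vec (s t)) + softmin_gap (\<beta> t))"
    unfolding softmin_gap_def using b margin_pos n_pos by (simp add: field_simps)
  also have "\<dots> \<le> dm t * (norm (sinh_vec (s t)) + softmin_gap (\<beta> t))"
    using dm_ge_loss_sum[of t] softmin_gap_nonneg[OF b] by (intro mult_right_mono) auto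
  finally show ?thesis .
qed

lemma power2_V: "(V t)^2 = 2 * P t"
  unfolding V_def P_def using cosh_potential_nonneg by simp

lemma norm_s_le_V: "norm (s t) \<le> V t"
  unfolding V_def P_def using power2_norm_le_cosh_potential[of "s t"] by (simp add: real_le_rsqrt)

lemma V_le: "norm (s t) \<le> 1 \<Longrightarrow> V t \<le> 2 * norm (s t)"
proof -
  assume "norm (s t) \<le> 1"
  then have "2 * P t \<le> 4 * (norm (s t))^2"
    using cosh_potential_le_power2_norm[of "s t"] zero_le_power2[of "norm (s t)"]
    unfolding P_def by linarith
  then have "2 * P t \<le> (2 * norm (s t))^2" by (simp add: power_mult_distrib)
  then show ?thesis unfolding V_def by (intro real_le_lsqrt) auto
qed

lemma V_pos: "0 < t \<Longrightarrow> 0 < V t"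
  using m_pos[of t] m_le_norm_s[of t] norm_s_le_V[of t] by linarith

lemma V_deriv: "0 < t \<Longrightarrow> (V has_real_derivative dP t / V t) (at t)"
proof -
  assume t: "0 < t"
  have "0 < 2 * P t" using V_pos[OF t] by (simp flip: power2_V)
  then have "((\<lambda>t. sqrt (2 * P t)) has_real_derivative inverse (sqrt (2 * P t)) / 2 * (2 * dP t)) (at t)"
    by (intro DERIV_chain2[OF DERIV_real_sqrt] DERIV_cmult P_deriv t)
  then show ?thesis unfolding V_def[abs_def] by (simp add: field_simps)
qed

lemma ln_m_deriv: "0 < t \<Longrightarrow> ((\<lambda>t. ln (m t)) has_real_derivative dm t / m t) (at t)"
  using DERIV_chain2[OF DERIV_ln_divide[OF m_pos] m_deriv] by simp

lemma V_deriv_le: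
  assumes x: "0 < x" "x \<le> T" and s_le: "norm (s x) \<le> \<rho>" "\<rho> \<le> 1"
  shows "dP x / V x \<le> (1 + \<rho>^2 / 4) * dm x + softmin_gap (\<beta> T) * (dm x / m x)"
proof -
  have m_pos: "0 < m x" by (rule m_pos[OF x(1)])
  have m_le_V: "m x \<le> V x" using m_le_norm_s norm_s_le_V order_trans by blast
  have V2: "(V x)^2 / 8 \<le> \<rho>^2 / 4"
  proof -
    have "cosh_potential (s x) \<le> (norm (s x))^2" using s_le by (intro cosh_potential_le_power2_norm) auto
    also have "\<dots> \<le> \<rho>^2" using s_le by (intro power_mono) auto
    finally show ?thesis using power2_V[of x] by (simp add: P_def)
  qed
  have "norm (sinh_vec (s x)) \<le> V x * (1 + (V x)^2 / 8)"
    using norm_sinh_vec_le_cosh_potential[of "s x"] by (simp add: V_def P_def)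
  also have "\<dots> \<le> V x * (1 + \<rho>^2 / 4)" using V2 V_pos[OF x(1)] by (intro mult_left_mono) auto
  finally have sinh_le: "norm (sinh_vec (s x)) \<le> V x * (1 + \<rho>^2 / 4)" .
  have "softmin_gap (\<beta> x) \<le> softmin_gap (\<beta> T)"
    unfolding softmin_gap_def using \<beta>_antimono[OF x(2)] \<beta>_pos[of x] \<beta>_pos[of T] margin_pos n_pos
    by (intro divide_left_mono mult_left_mono mult_pos_pos) auto
  then have "dP x \<le> dm x * (V x * (1 + \<rho>^2 / 4) + softmin_gap (\<beta> T))"
    using dP_le[of x] sinh_le dm_pos[of x]
    by (meson add_mono mult_le_cancel_left_pos order_trans)
  then have "dP x / V x \<le> dm x * (V x * (1 + \<rho>^2 / 4) + softmin_gap (\<beta> T)) / V x"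
    using V_pos[OF x(1)] by (simp add: divide_right_mono)
  also have "\<dots> = (1 + \<rho>^2 / 4) * dm x + softmin_gap (\<beta> T) * dm x / V x"
    using V_pos[OF x(1)] by (simp add: field_simps)
  also have "softmin_gap (\<beta> T) * dm x / V x \<le> softmin_gap (\<beta> T) * (dm x / m x)"
    using m_pos m_le_V dm_pos[of x] softmin_gap_nonneg[OF \<beta>_pos]
    by (simp add: frac_le mult_nonneg_nonneg)
  finally show ?thesis by simp
qed

lemma V_minus_m_le:
  assumes t: "0 < t1" "t1 \<le> t" "t \<le> T" and "\<rho> \<le> 1"
    and s_le: "\<And>\<tau>. t1 \<le> \<tau> \<Longrightarrow> \<tau> \<le> t \<Longrightarrow> norm (s \<tau>) \<le> \<rho>"
  shows "V t - m t \<le> V t1 - m t1 + \<rho>^2 / 4 * (m t - m t1) + softmin_gap (\<beta> T) * (ln (m t) - ln (m t1))"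
proof -
  define F where "F \<tau> = (1 + \<rho>^2 / 4) * m \<tau> + softmin_gap (\<beta> T) * ln (m \<tau>) - V \<tau>" for \<tau>
  define F' where "F' \<tau> = (1 + \<rho>^2 / 4) * dm \<tau> + softmin_gap (\<beta> T) * (dm \<tau> / m \<tau>) - dP \<tau> / V \<tau>" for \<tau>
  have F_deriv: "(F has_real_derivative F' \<tau>) (at \<tau>)" if "0 < \<tau>" for \<tau>
    unfolding F_def[abs_def] F'_def
    by (intro DERIV_diff DERIV_add DERIV_cmult m_deriv ln_m_deriv V_deriv that)
  have "F t1 \<le> F t"
  proof (rule has_real_derivative_nonneg_imp_le[where f = F and f' = F' and a = t1 and b = t])
    show "continuous_on {t1..t} F"
    proof (rule DERIV_continuous_on)
      show "(F has_field_derivative F' x) (at x within {t1..t})" if "x \<in> {t1..t}" for x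
        using that t by (intro has_field_derivative_at_within[OF F_deriv]) auto
    qed
    show "(F has_real_derivative F' x) (at x)" if "t1 < x" for x
      using that t by (intro F_deriv) auto
    show "0 \<le> F' x" if "t1 < x" "x < t" for x
    proof -
      have "norm (s x) \<le> \<rho>" using s_le that by auto
      then have "dP x / V x \<le> (1 + \<rho>^2 / 4) * dm x + softmin_gap (\<beta> T) * (dm x / m x)"
        using that t assms(4) by (intro V_deriv_le) auto
      then show ?thesis unfolding F'_def by linarith
    qed
  qed (use t in auto)
  then show ?thesis unfolding F_def by (simp add: field_simps)
qed

lemma norm_s_le_if_m_le: "0 \<le> t \<Longrightarrow> t \<le> T \<Longrightarrow> m T \<le> mmax \<Longrightarrow> norm (s t) \<le> Cs * mmax"
  using norm_s_le[of t] m_mono[of t T] Cs_pos by (smt (verit) mult_left_mono)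

lemma aligned_if_m_between:
  assumes t: "0 < t1" "t1 \<le> \<tau>" "\<tau> \<le> T" and a: "m t1 = a1" "0 < a1" "0 < a2"
    and m_\<tau>: "a2 \<le> m \<tau>" "m \<tau> \<le> mmax" and \<rho>_le: "Cs * mmax \<le> 1"
  shows "(1 - align_err (\<beta> T) a1 a2 mmax) * norm (s \<tau>) \<le> m \<tau>"
proof -
  define \<delta> where "\<delta> = align_err (\<beta> T) a1 a2 mmax"
  have m_pos: "0 < m \<tau>" using a m_\<tau> by simp
  have a1_le: "a1 \<le> mmax" using a m_\<tau> m_mono[of t1 \<tau>] t by simp
  have "V \<tau> - m \<tau> \<le> V t1 - a1 + (Cs * mmax)^2 / 4 * (m \<tau> - a1) + softmin_gap (\<beta> T) * (ln (m \<tau>) - ln a1)"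
    unfolding a(1)[symmetric] using t \<rho>_le by (intro V_minus_m_le norm_s_le_if_m_le[OF _ _ m_\<tau>(2)]) auto
  moreover have "V t1 \<le> 2 * Cs * a1"
    using V_le[of t1] norm_s_le[of t1] norm_s_le_if_m_le[of t1 \<tau>] t a m_\<tau> \<rho>_le by fastforce
  moreover have "softmin_gap (\<beta> T) * (ln (m \<tau>) - ln a1) \<le> softmin_gap (\<beta> T) * (ln mmax - ln a1)"
    using m_pos m_\<tau> softmin_gap_nonneg[OF \<beta>_pos] by (intro mult_left_mono) auto
  moreover have "(Cs * mmax)^2 / 4 * (m \<tau> - a1) \<le> (Cs * mmax)^2 / 4 * m \<tau>"
    using a by (simp add: algebra_simps)
  ultimately have "V \<tau> - m \<tau> \<le> 2 * Cs * a1 + (Cs * mmax)^2 / 4 * m \<tau> + softmin_gap (\<beta> T) * (ln mmax - ln a1)"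
    using a by linarith
  also have "\<dots> \<le> \<delta> * m \<tau>"
  proof -
    have scale: "X \<le> X / a2 * m \<tau>" if "0 \<le> X" for X
      using mult_left_mono[of 1 "m \<tau> / a2" X] that m_\<tau> a by simp
    have "2 * Cs * a1 \<le> 2 * Cs * a1 / a2 * m \<tau>"
      using Cs_pos a by (intro scale) auto
    moreover have "softmin_gap (\<beta> T) * (ln mmax - ln a1) \<le> softmin_gap (\<beta> T) * (ln mmax - ln a1) / a2 * m \<tau>"
      using softmin_gap_nonneg[OF \<beta>_pos] a a1_le by (intro scale) auto
    ultimately show ?thesis unfolding \<delta>_def align_err_def by (simp add: algebra_simps)
  qed
  finally have "norm (s \<tau>) \<le> (1 + \<delta>) * m \<tau>"
    using norm_s_le_V[of \<tau>] by (simp add: algebra_simps)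
  then show ?thesis
    unfolding \<delta>_def[symmetric] using m_pos by (intro one_minus_mult_le_if_le_one_plus_mult) auto
qed

lemma q_ge_if_aligned:
  assumes t: "0 < t" "t \<le> T" and i: "i < n"
    and s_le: "norm (s t) \<le> \<rho>" "\<rho> \<le> 1" "Z * \<rho>^2 \<le> \<gamma> / 4"
    and \<delta>: "0 \<le> \<delta>" "Z * sqrt (2 * \<delta>) \<le> \<gamma> / 2" and aligned: "(1 - \<delta>) * norm (s t) \<le> m t"
  shows "\<beta> T * \<gamma> / 2 * m t \<le> q t i"
proof -
  let ?s = "s t"
  have "norm ?s * (w \<bullet> z i - norm (z i) * sqrt (2 * \<delta>)) \<le> ?s \<bullet> z i"
    using inner_ge_if_aligned[OF norm_w \<delta>(1)] aligned by (simp add: m_def)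
  moreover have "\<gamma> / 2 \<le> w \<bullet> z i - norm (z i) * sqrt (2 * \<delta>)"
    using mult_right_mono[OF norm_z_le[OF i], of "sqrt (2 * \<delta>)"] margin_le_inner[OF i] \<delta> by simp
  ultimately have inner_ge: "norm ?s * (\<gamma> / 2) \<le> ?s \<bullet> z i"
    by (meson mult_left_mono norm_ge_zero order_trans)
  have "\<bar>(sinh_vec ?s - ?s) \<bullet> z i\<bar> \<le> norm (sinh_vec ?s - ?s) * norm (z i)"
    by (rule Cauchy_Schwarz_ineq2)
  also have "\<dots> \<le> (norm ?s)^3 * Z"
    using norm_sinh_vec_minus_le[of ?s] s_le norm_z_le[OF i] by (intro mult_mono) auto
  also have "\<dots> = norm ?s * (Z * (norm ?s)^2)" by (simp add: power3_eq_cube power2_eq_square)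
  also have "\<dots> \<le> norm ?s * (\<gamma> / 4)"
    using s_le Z_pos by (intro mult_left_mono order_trans[OF _ s_le(3)] mult_left_mono power_mono) auto
  finally have "norm ?s * (\<gamma> / 4) \<le> sinh_vec ?s \<bullet> z i"
    using inner_ge unfolding inner_diff_left abs_le_iff by linarith
  then have "2 * \<beta> t * (norm ?s * (\<gamma> / 4)) \<le> q t i"
    unfolding q_def using \<beta>_pos[of t] by (intro mult_left_mono) auto
  moreover have "\<beta> T * m t \<le> \<beta> t * norm ?s"
    using \<beta>_antimono[OF t(2)] \<beta>_pos[of T] m_le_norm_s[of t] m_pos[OF t(1)] by (intro mult_mono) auto
  then have "\<beta> T * \<gamma> / 2 * m t \<le> 2 * \<beta> t * (norm ?s * (\<gamma> / 4))"
    using mult_left_mono[of _ _ "\<gamma> / 2"] margin_pos by (simp add: algebra_simps)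
  ultimately show ?thesis by linarith
qed

lemma dm_le_exp_if_aligned:
  assumes t: "0 < t" "t \<le> T"
    and s_le: "norm (s t) \<le> \<rho>" "\<rho> \<le> 1" "Z * \<rho>^2 \<le> \<gamma> / 4"
    and \<delta>: "0 \<le> \<delta>" "Z * sqrt (2 * \<delta>) \<le> \<gamma> / 2" and aligned: "(1 - \<delta>) * norm (s t) \<le> m t"
  shows "dm t \<le> 4 * Z * exp (- (\<beta> T * \<gamma> / 2) * m t)"
proof -
  have "loss_sum t \<le> (\<Sum>i<n. exp (- (\<beta> T * \<gamma> / 2 * m t)))"
    unfolding loss_sum_def using q_ge_if_aligned[OF t _ s_le \<delta> aligned] by (intro sum_mono) auto
  then have "4 * Z / real n * loss_sum t \<le> 4 * Z * exp (- (\<beta> T * \<gamma> / 2) * m t)"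
    using Z_pos n_pos by (simp add: field_simps)
  then show ?thesis using dm_le_loss_sum[of t] by linarith
qed

lemma dm_ge_exp_near_end:
  assumes t: "0 < t" "T - 1 / lam \<le> t" and s_le: "norm (s t) \<le> 1"
  shows "4 * \<gamma> / real n * exp (- (4 * exp 2 * \<beta> T * Z * Cs) * m t) \<le> dm t"
proof -
  have "q t 0 \<le> 2 * \<beta> t * (norm (sinh_vec (s t)) * norm (z 0))"
    unfolding q_def using \<beta>_pos[of t] norm_cauchy_schwarz by (intro mult_left_mono) auto
  also have "\<dots> \<le> 2 * (exp 2 * \<beta> T) * ((2 * (Cs * m t)) * Z)"
    using \<beta>_le_near_end[OF t(2)] \<beta>_pos[of t] norm_sinh_vec_le[OF s_le] norm_s_le[of t]
      norm_z_le[of 0] n_pos t(1) Z_pos Cs_pos m_pos[OF t(1)]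
    by (intro mult_mono mult_left_mono) auto
  finally have "exp (- (4 * exp 2 * \<beta> T * Z * Cs) * m t) \<le> exp (- q t 0)"
    by (simp add: mult_ac)
  also have "\<dots> \<le> loss_sum t"
    unfolding loss_sum_def by (rule member_le_sum) (use n_pos in auto)
  finally have "4 * \<gamma> / real n * exp (- (4 * exp 2 * \<beta> T * Z * Cs) * m t) \<le> 4 * \<gamma> / real n * loss_sum t"
    using margin_pos by (intro mult_left_mono) auto
  then show ?thesis using dm_ge_loss_sum[of t] by linarith
qed

lemma m_attains:
  assumes "0 \<le> T" "0 < a" "a \<le> m T"
  obtains t where "0 < t" "t \<le> T" "m t = a"
proof -
  obtain t where "0 \<le> t" "t \<le> T" "m t = a"
    using IVT'[of m 0 a T] m_0 assms continuous_on_m[of 0 T] by auto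
  moreover have "t \<noteq> 0" using \<open>m t = a\<close> m_0 assms(2) by auto
  ultimately show ?thesis by (intro that[of t]) auto
qed

context
  fixes T a1 a2 mmax :: real
  assumes T_pos: "0 < T" and T_ge: "1 / lam \<le> T"
    and a1_pos: "0 < a1" and a1_le_a2: "a1 \<le> a2" and a2_less: "a2 < mmax"
    and \<rho>_le_1: "Cs * mmax \<le> 1" and \<rho>_small: "Z * (Cs * mmax)^2 \<le> \<gamma> / 4"
    and \<delta>_small: "Z * sqrt (2 * align_err (\<beta> T) a1 a2 mmax) \<le> \<gamma> / 2"
    and slow_escape: "ln (exp (\<beta> T * \<gamma> / 2 * a2) + 4 * Z * (\<beta> T * \<gamma> / 2) * T) < \<beta> T * \<gamma> / 2 * mmax"
    and fast_start: "a2 \<le> ln (1 + (4 * exp 2 * \<beta> T * Z * Cs) * (4 * \<gamma> / real n) / lam)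
                             / (4 * exp 2 * \<beta> T * Z * Cs)"
begin

lemma align_err_at_T_nonneg: "0 \<le> align_err (\<beta> T) a1 a2 mmax"
  using a1_pos a1_le_a2 a2_less by (intro align_err_nonneg \<beta>_pos) auto

(* Once m has passed a2, s is aligned with w, every margin q t i is at least kappa * m and
   so dm <= 4 Z exp (- kappa m): m grows only logarithmically and cannot reach mmax by time T. *)
lemma m_le_mmax: "m T \<le> mmax"
proof (rule ccontr)
  define \<kappa> where "\<kappa> = \<beta> T * \<gamma> / 2"
  have \<kappa>_pos: "0 < \<kappa>" unfolding \<kappa>_def using \<beta>_pos margin_pos by simp
  assume "\<not> m T \<le> mmax"
  obtain ts where ts: "0 < ts" "ts \<le> T" "m ts = mmax"
    by (rule m_attains[of T mmax]) (use \<open>\<not> m T \<le> mmax\<close> T_pos a1_pos a1_le_a2 a2_less in auto)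
  obtain t2 where t2: "0 < t2" "t2 \<le> ts" "m t2 = a2"
    by (rule m_attains[of ts a2]) (use ts a1_pos a1_le_a2 a2_less in auto)
  obtain t1 where t1: "0 < t1" "t1 \<le> t2" "m t1 = a1"
    by (rule m_attains[of t2 a1]) (use t2 a1_pos a1_le_a2 in auto)
  have "dm u \<le> 4 * Z * exp (- \<kappa> * m u)" if u: "t2 < u" "u < ts" for u
  proof -
    have m_u: "a2 \<le> m u" "m u \<le> mmax" using m_mono[of t2 u] m_mono[of u ts] t2 ts u by auto
    have u_pos: "0 < u" "u \<le> T" using t2 ts u by auto
    have "(1 - align_err (\<beta> T) a1 a2 mmax) * norm (s u) \<le> m u"
      by (rule aligned_if_m_between[OF t1(1) _ u_pos(2) t1(3) a1_pos _ m_u \<rho>_le_1])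
        (use t1 t2 u a1_pos a1_le_a2 in auto)
    moreover have "norm (s u) \<le> Cs * mmax"
      using norm_s_le_if_m_le[of u ts mmax] ts u u_pos by simp
    ultimately show ?thesis unfolding \<kappa>_def
      by (rule dm_le_exp_if_aligned[OF u_pos _ \<rho>_le_1 \<rho>_small align_err_at_T_nonneg \<delta>_small, rotated])
  qed
  then have "exp (\<kappa> * m ts) \<le> exp (\<kappa> * m t2) + \<kappa> * (4 * Z) * (ts - t2)"
    using t1 t2 \<kappa>_pos by (intro deriv_le_exp_imp_exp_le[where f' = dm] continuous_on_m m_deriv) auto
  also have "\<dots> \<le> exp (\<kappa> * a2) + 4 * Z * \<kappa> * T"
    using t1 t2 ts \<kappa>_pos Z_pos by (simp add: mult_left_mono)
  finally have "\<kappa> * mmax \<le> ln (exp (\<kappa> * a2) + 4 * Z * \<kappa> * T)"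
    using ts \<kappa>_pos Z_pos T_pos by (subst ln_ge_iff) (auto intro: add_pos_nonneg)
  then show False using slow_escape unfolding \<kappa>_def by (simp add: mult_ac)
qed

(* On the last stretch of length 1 / lam the scale is within a factor e^2 of beta T, which
   keeps dm >= 4 gamma / n * exp (- kappa m) and pushes m beyond a2. *)
lemma a2_le_m: "a2 \<le> m T"
proof -
  define \<kappa> where "\<kappa> = 4 * exp 2 * \<beta> T * Z * Cs"
  define B where "B = 4 * \<gamma> / real n"
  have \<kappa>_pos: "0 < \<kappa>" unfolding \<kappa>_def using \<beta>_pos Z_pos Cs_pos by simp
  have B_pos: "0 < B" unfolding B_def using margin_pos n_pos by simp
  have T0: "0 \<le> T - 1 / lam" using T_ge by simp
  have "B * exp (- \<kappa> * m x) \<le> dm x" if "T - 1 / lam < x" "x < T" for x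
    unfolding B_def \<kappa>_def using that T0 norm_s_le_if_m_le[OF _ _ m_le_mmax, of x] \<rho>_le_1
    by (intro dm_ge_exp_near_end) auto
  then have "exp (\<kappa> * m (T - 1 / lam)) + \<kappa> * B * (T - (T - 1 / lam)) \<le> exp (\<kappa> * m T)"
    using T0 \<kappa>_pos lam_pos by (intro deriv_ge_exp_imp_exp_ge[where f' = dm] continuous_on_m m_deriv) auto
  then have "exp (\<kappa> * m (T - 1 / lam)) + \<kappa> * B / lam \<le> exp (\<kappa> * m T)" by simp
  moreover have "1 \<le> exp (\<kappa> * m (T - 1 / lam))" using m_nonneg[OF T0] \<kappa>_pos by simp
  ultimately have "1 + \<kappa> * B / lam \<le> exp (\<kappa> * m T)" by linarith
  moreover have "0 < 1 + \<kappa> * B / lam" using \<kappa>_pos B_pos lam_pos by (intro add_pos_pos) auto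
  ultimately have "ln (1 + \<kappa> * B / lam) \<le> \<kappa> * m T"
    using ln_mono[of "1 + \<kappa> * B / lam" "exp (\<kappa> * m T)"] by simp
  moreover have "\<kappa> * a2 \<le> ln (1 + \<kappa> * B / lam)"
    using fast_start \<kappa>_pos unfolding \<kappa>_def[symmetric] B_def[symmetric] by (simp add: field_simps)
  ultimately have "\<kappa> * a2 \<le> \<kappa> * m T" by linarith
  then show ?thesis using \<kappa>_pos by simp
qed

lemma norm_sgn_sinh_vec_s_minus_le:
  "norm (sgn (sinh_vec (s T)) - w) \<le> 2 * (Cs * mmax)^2 + sqrt (2 * align_err (\<beta> T) a1 a2 mmax)"
proof -
  obtain t1 where t1: "0 < t1" "t1 \<le> T" "m t1 = a1"
    by (rule m_attains[of T a1]) (use T_pos a1_pos a1_le_a2 a2_le_m in auto)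
  have s_le: "norm (s T) \<le> Cs * mmax"
    using norm_s_le_if_m_le[OF _ order_refl m_le_mmax] T_pos by simp
  have "(1 - align_err (\<beta> T) a1 a2 mmax) * norm (s T) \<le> m T"
    by (rule aligned_if_m_between[OF t1(1,2) order_refl t1(3) a1_pos _ a2_le_m m_le_mmax \<rho>_le_1])
      (use a1_pos a1_le_a2 in simp)
  moreover have "s T \<noteq> 0" using m_pos[OF T_pos] by (auto simp: m_def)
  ultimately have "norm (sgn (sinh_vec (s T)) - w) \<le> 2 * (norm (s T))^2 + sqrt (2 * align_err (\<beta> T) a1 a2 mmax)"
    unfolding m_def
    by (intro norm_sgn_sinh_vec_minus_le_if_aligned[OF norm_w _ order_trans[OF s_le \<rho>_le_1] align_err_at_T_nonneg])
  also have "\<dots> \<le> 2 * (Cs * mmax)^2 + sqrt (2 * align_err (\<beta> T) a1 a2 mmax)"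
    using s_le by (intro add_right_mono mult_left_mono power_mono) auto
  finally show ?thesis .
qed

end

end

section \<open>Gradient flow of the diagonal linear network\<close>

definition loss_descent_dir :: "nat \<Rightarrow> (nat \<Rightarrow> real^'d) \<Rightarrow> (real^'d) \<times> (real^'d) \<Rightarrow> real^'d" where
  "loss_descent_dir n z \<theta> = (\<Sum>i<n. exp (- (eff_weight \<theta> \<bullet> z i)) *\<^sub>R z i)"

definition reg_loss_grad ::
  "real \<Rightarrow> nat \<Rightarrow> (nat \<Rightarrow> real^'d) \<Rightarrow> (real^'d) \<times> (real^'d) \<Rightarrow> (real^'d) \<times> (real^'d)" where
  "reg_loss_grad lam n z \<theta> =
     ((\<chi> k. (lam - 2 / real n * loss_descent_dir n z \<theta> $ k) * fst \<theta> $ k),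
      (\<chi> k. (lam + 2 / real n * loss_descent_dir n z \<theta> $ k) * snd \<theta> $ k))"

lemma eff_weight_inner_has_derivative:
  "((\<lambda>\<theta>. eff_weight \<theta> \<bullet> v) has_derivative
     (\<lambda>h. \<Sum>k\<in>UNIV. (2 * fst \<theta> $ k * fst h $ k - 2 * snd \<theta> $ k * snd h $ k) * v $ k)) (at \<theta>)"
  unfolding eff_weight_def inner_vec_def
  by (rule has_derivative_eq_rhs)
    (auto intro!: derivative_eq_intros bounded_linear.has_derivative[OF bounded_linear_vec_nth]
      simp: mult_ac)

lemma reg_loss_has_derivative:
  fixes x :: "nat \<Rightarrow> real^'d"
  assumes "0 < n"
  shows "(reg_loss lam n x y has_derivative (\<lambda>h. reg_loss_grad lam n (\<lambda>i. y i *\<^sub>R x i) \<theta> \<bullet> h)) (at \<theta>)"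
proof -
  define z where "z = (\<lambda>i. y i *\<^sub>R x i)"
  define D where "D \<theta> h i = (\<Sum>k\<in>UNIV. (2 * fst \<theta> $ k * fst h $ k - 2 * snd \<theta> $ k * snd h $ k) * z i $ k)"
    for \<theta> h :: "(real^'d) \<times> (real^'d)" and i
  have "reg_loss lam n x y = (\<lambda>\<theta>. 1 / real n * (\<Sum>i<n. exp (- (eff_weight \<theta> \<bullet> z i))) + lam / 2 * (\<theta> \<bullet> \<theta>))"
    unfolding reg_loss_def exp_loss_def z_def
    by (simp add: power2_norm_eq_inner[symmetric] mult.left_commute)
  moreover have "((\<lambda>\<theta>. exp (- (eff_weight \<theta> \<bullet> z i))) has_derivative
      (\<lambda>h. - D \<theta> h i * exp (- (eff_weight \<theta> \<bullet> z i)))) (at \<theta>)" for i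
    unfolding D_def by (intro has_derivative_exp has_derivative_minus eff_weight_inner_has_derivative)
  then have "((\<lambda>\<theta>. 1 / real n * (\<Sum>i<n. exp (- (eff_weight \<theta> \<bullet> z i))) + lam / 2 * (\<theta> \<bullet> \<theta>))
      has_derivative (\<lambda>h. 1 / real n * (\<Sum>i<n. - D \<theta> h i * exp (- (eff_weight \<theta> \<bullet> z i)))
                         + lam / 2 * (\<theta> \<bullet> h + h \<bullet> \<theta>))) (at \<theta>)"
    by (intro has_derivative_add has_derivative_mult_right has_derivative_sum has_derivative_inner
        has_derivative_ident)
  moreover have "1 / real n * (\<Sum>i<n. - D \<theta> h i * exp (- (eff_weight \<theta> \<bullet> z i))) + lam / 2 * (\<theta> \<bullet> h + h \<bullet> \<theta>)
      = reg_loss_grad lam n z \<theta> \<bullet> h" for h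
    unfolding reg_loss_grad_def loss_descent_dir_def D_def inner_prod_def inner_vec_def
    using assms
    by (simp add: algebra_simps sum.distrib sum_distrib_left sum_distrib_right sum_subtractf sum_negf
        sum.swap[of _ UNIV] diff_divide_distrib add_divide_distrib)
  ultimately show ?thesis unfolding z_def by simp
qed

definition log_ratio :: "(real^'d) \<times> (real^'d) \<Rightarrow> real^'d" where
  "log_ratio \<theta> = (\<chi> k. ln (fst \<theta> $ k) - ln (snd \<theta> $ k))"

lemma gradient_flow_has_vector_derivative:
  fixes x :: "nat \<Rightarrow> real^'d" and \<theta> :: "real \<Rightarrow> (real^'d) \<times> (real^'d)"
  assumes "0 < n" and flow: "is_gradient_flow (reg_loss lam n x y) \<theta>0 \<theta>" and "0 \<le> t"
  shows "(\<theta> has_vector_derivative - reg_loss_grad lam n (\<lambda>i. y i *\<^sub>R x i) (\<theta> t)) (at t within {0..})"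
proof -
  let ?G = "reg_loss_grad lam n (\<lambda>i. y i *\<^sub>R x i) (\<theta> t)"
  obtain g where g: "(reg_loss lam n x y has_derivative (\<lambda>h. g \<bullet> h)) (at (\<theta> t))"
    "(\<theta> has_vector_derivative - g) (at t within {0..})"
    using flow \<open>0 \<le> t\<close> unfolding is_gradient_flow_def by blast
  have "(\<lambda>h. g \<bullet> h) = (\<lambda>h. ?G \<bullet> h)"
    using has_derivative_unique[OF g(1) reg_loss_has_derivative[OF \<open>0 < n\<close>]] .
  then have "g \<bullet> (g - ?G) = ?G \<bullet> (g - ?G)" by (rule fun_cong)
  then have "(g - ?G) \<bullet> (g - ?G) = 0" by (simp add: inner_diff_left)
  then show ?thesis using g(2) by simp
qed

lemma gradient_flow_coordinate_derivs:
  fixes x :: "nat \<Rightarrow> real^'d" and \<theta> :: "real \<Rightarrow> (real^'d) \<times> (real^'d)" and k :: 'd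
  assumes "0 < n" and flow: "is_gradient_flow (reg_loss lam n x y) \<theta>0 \<theta>" and "0 \<le> t"
  defines "d \<equiv> \<lambda>t. loss_descent_dir n (\<lambda>i. y i *\<^sub>R x i) (\<theta> t) $ k"
  shows "((\<lambda>t. fst (\<theta> t) $ k) has_real_derivative (2 / real n * d t - lam) * fst (\<theta> t) $ k) (at t within {0..})"
    and "((\<lambda>t. snd (\<theta> t) $ k) has_real_derivative - (2 / real n * d t + lam) * snd (\<theta> t) $ k) (at t within {0..})"
proof -
  note \<theta>_deriv = gradient_flow_has_vector_derivative[OF assms(1-3)]
  have "bounded_linear (\<lambda>p::(real^'d) \<times> (real^'d). fst p $ k)"
    by (rule bounded_linear_compose[OF bounded_linear_vec_nth bounded_linear_fst])
  from bounded_linear.has_vector_derivative[OF this \<theta>_deriv]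
  show "((\<lambda>t. fst (\<theta> t) $ k) has_real_derivative (2 / real n * d t - lam) * fst (\<theta> t) $ k) (at t within {0..})"
    unfolding has_real_derivative_iff_has_vector_derivative reg_loss_grad_def d_def
    by (simp add: algebra_simps)
  have "bounded_linear (\<lambda>p::(real^'d) \<times> (real^'d). snd p $ k)"
    by (rule bounded_linear_compose[OF bounded_linear_vec_nth bounded_linear_snd])
  from bounded_linear.has_vector_derivative[OF this \<theta>_deriv]
  show "((\<lambda>t. snd (\<theta> t) $ k) has_real_derivative - (2 / real n * d t + lam) * snd (\<theta> t) $ k) (at t within {0..})"
    unfolding has_real_derivative_iff_has_vector_derivative reg_loss_grad_def d_def
    by (simp add: algebra_simps)
qed

lemma gradient_flow_balanced:
  fixes x :: "nat \<Rightarrow> real^'d" and \<theta> :: "real \<Rightarrow> (real^'d) \<times> (real^'d)" and k :: 'd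
  assumes "0 < n" "0 < \<alpha>" and flow: "is_gradient_flow (reg_loss lam n x y) ((\<chi> k. \<alpha>), (\<chi> k. \<alpha>)) \<theta>"
    and "0 \<le> t"
  shows "fst (\<theta> t) $ k * snd (\<theta> t) $ k = flow_scale \<alpha> lam t"
    and "0 < fst (\<theta> t) $ k" and "0 < snd (\<theta> t) $ k"
proof -
  define u where "u t = fst (\<theta> t) $ k" for t
  define v where "v t = snd (\<theta> t) $ k" for t
  note derivs = gradient_flow_coordinate_derivs[OF assms(1) flow, of _ k, folded u_def v_def]
  have u_0: "u 0 = \<alpha>" and v_0: "v 0 = \<alpha>" using flow by (auto simp: is_gradient_flow_def u_def v_def)
  have cont: "continuous_on {0..} u" "continuous_on {0..} v"
    using derivs by (auto intro!: DERIV_continuous_on)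
  have at_eq: "at x within {0..} = at x" if "0 < x" for x :: real
    using that by (intro at_within_interior) auto
  have conserved: "u t * v t = flow_scale \<alpha> lam t" if "0 \<le> t" for t
  proof -
    define c where "c t = u t * v t * exp (2 * lam * t)" for t
    have "c t = c 0"
    proof (cases "t = 0")
      case False
      show ?thesis
      proof (rule DERIV_isconst_end[where f = c and a = 0 and b = t])
        show "continuous_on {0..t} c"
          unfolding c_def using cont by (auto intro!: continuous_intros intro: continuous_on_subset)
        show "(c has_real_derivative 0) (at x)" if "0 < x" "x < t" for x
          using derivs(1)[of x] derivs(2)[of x] that unfolding c_def at_eq[OF that(1)]
          by (auto intro!: derivative_eq_intros simp: algebra_simps)
      qed (use that False in auto)
    qed simp
    then show ?thesis
      unfolding c_def flow_scale_def using u_0 v_0 by (simp add: exp_minus field_simps power2_eq_square)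
  qed
  have nonzero: "u \<tau> \<noteq> 0" "v \<tau> \<noteq> 0" if "0 \<le> \<tau>" for \<tau>
    using conserved[OF that] \<open>0 < \<alpha>\<close> by (auto simp: flow_scale_def)
  show "0 < u t"
  proof (rule pos_if_continuous_nonzero[OF \<open>0 \<le> t\<close>])
    show "continuous_on {0..t} u" using cont(1) by (rule continuous_on_subset) auto
  qed (use nonzero(1) u_0 \<open>0 < \<alpha>\<close> in auto)
  show "0 < v t"
  proof (rule pos_if_continuous_nonzero[OF \<open>0 \<le> t\<close>])
    show "continuous_on {0..t} v" using cont(2) by (rule continuous_on_subset) auto
  qed (use nonzero(2) v_0 \<open>0 < \<alpha>\<close> in auto)
  show "u t * v t = flow_scale \<alpha> lam t" using conserved \<open>0 \<le> t\<close> .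
qed

lemma gradient_flow_log_ratio:
  fixes x :: "nat \<Rightarrow> real^'d" and \<theta> :: "real \<Rightarrow> (real^'d) \<times> (real^'d)"
  assumes "0 < n" "0 < \<alpha>" and flow: "is_gradient_flow (reg_loss lam n x y) ((\<chi> k. \<alpha>), (\<chi> k. \<alpha>)) \<theta>"
  defines "s \<equiv> \<lambda>t. log_ratio (\<theta> t)" and "z \<equiv> \<lambda>i. y i *\<^sub>R x i"
  shows "s 0 = 0" and "continuous_on {0..} s"
    and "\<And>t. 0 \<le> t \<Longrightarrow> eff_weight (\<theta> t) = (2 * flow_scale \<alpha> lam t) *\<^sub>R sinh_vec (s t)"
    and "\<And>t k. 0 < t \<Longrightarrow> ((\<lambda>t. s t $ k) has_real_derivative
      4 / real n * (\<Sum>i<n. exp (- (2 * flow_scale \<alpha> lam t * (sinh_vec (s t) \<bullet> z i))) * z i $ k)) (at t)"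
proof -
  note balanced = gradient_flow_balanced[OF assms(1,2) flow]
  note derivs = gradient_flow_coordinate_derivs[OF assms(1) flow]
  show "s 0 = 0"
    using flow unfolding s_def log_ratio_def is_gradient_flow_def by (simp add: vec_eq_iff)
  have cont: "continuous_on {0..} (\<lambda>t. fst (\<theta> t) $ k)" "continuous_on {0..} (\<lambda>t. snd (\<theta> t) $ k)" for k
    using derivs by (auto intro!: DERIV_continuous_on)
  show "continuous_on {0..} s"
    unfolding s_def log_ratio_def
    by (intro continuous_on_vec_lambda continuous_on_diff continuous_on_ln cont)
      (auto simp: balanced(2,3) less_imp_neq[symmetric])
  show eff_weight_eq: "eff_weight (\<theta> t) = (2 * flow_scale \<alpha> lam t) *\<^sub>R sinh_vec (s t)" if "0 \<le> t" for t
  proof -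
    have "(fst (\<theta> t) $ k)^2 - (snd (\<theta> t) $ k)^2
        = 2 * flow_scale \<alpha> lam t * sinh (ln (fst (\<theta> t) $ k) - ln (snd (\<theta> t) $ k))" for k
      using sinh_ln_diff[OF balanced(2,3)[OF that, of k]] balanced(1)[OF that, of k] by simp
    then show ?thesis
      unfolding eff_weight_def sinh_vec_def s_def log_ratio_def by (simp add: vec_eq_iff)
  qed
  show "((\<lambda>t. s t $ k) has_real_derivative
      4 / real n * (\<Sum>i<n. exp (- (2 * flow_scale \<alpha> lam t * (sinh_vec (s t) \<bullet> z i))) * z i $ k)) (at t)"
    if "0 < t" for t k
  proof -
    let ?d = "loss_descent_dir n z (\<theta> t) $ k"
    have at_eq: "at t within {0..} = at t"
      using that by (intro at_within_interior) auto
    have "((\<lambda>t. ln (fst (\<theta> t) $ k) - ln (snd (\<theta> t) $ k)) has_real_derivative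
        (2 / real n * ?d - lam) * fst (\<theta> t) $ k / fst (\<theta> t) $ k
        - (- (2 / real n * ?d + lam) * snd (\<theta> t) $ k) / snd (\<theta> t) $ k) (at t)"
      using derivs[of t k, unfolded at_eq, folded z_def] balanced(2,3)[of t k] that
      by (auto intro!: derivative_eq_intros)
    moreover have "?d = (\<Sum>i<n. exp (- (2 * flow_scale \<alpha> lam t * (sinh_vec (s t) \<bullet> z i))) * z i $ k)"
      unfolding loss_descent_dir_def eff_weight_eq[OF less_imp_le[OF that]] by simp
    ultimately show ?thesis
      using balanced(2,3)[of t k] that unfolding s_def log_ratio_def by (simp add: field_simps)
  qed
qed

lemma max_margin_data_if_max_L2_margin_dir:
  fixes x :: "nat \<Rightarrow> real^'d"
  assumes "0 < n" and separable: "\<exists>w. \<forall>i<n. 0 < y i * (w \<bullet> x i)"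
    and max_dir: "is_max_L2_margin_dir n x y w"
  shows "max_margin_data n (\<lambda>i. y i *\<^sub>R x i) w (margin n x y w) (\<Sum>i<n. norm (y i *\<^sub>R x i))"
proof -
  define z where "z i = y i *\<^sub>R x i" for i
  define M where "M v = Min ((\<lambda>i. v \<bullet> z i) ` {..<n})" for v
  have margin_eq: "margin n x y v = M v" for v
    unfolding margin_def M_def z_def by simp
  have fin: "finite ((\<lambda>i. v \<bullet> z i) ` {..<n})" "(\<lambda>i. v \<bullet> z i) ` {..<n} \<noteq> {}" for v
    using \<open>0 < n\<close> by auto
  have M_le: "M v \<le> v \<bullet> z i" if "i < n" for v i
    unfolding M_def using fin that by (intro Min_le) auto
  have M_attained: "\<exists>j<n. M v = v \<bullet> z j" for v
    using Min_in[OF fin] unfolding M_def by auto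
  have norm_w: "norm w = 1" and w_opt: "\<And>v. norm v = 1 \<Longrightarrow> M v \<le> M w"
    using max_dir unfolding is_max_L2_margin_dir_def margin_eq by auto
  have scaled: "M v \<le> M w * norm v" for v
  proof (cases "v = 0")
    case False
    obtain j where "j < n" "M (sgn v) = sgn v \<bullet> z j" using M_attained by blast
    then have "M v \<le> norm v * M (sgn v)"
      using M_le[of j v] False by (simp add: sgn_div_norm mult.assoc[symmetric])
    also have "\<dots> \<le> norm v * M w"
      using w_opt[of "sgn v"] False by (intro mult_left_mono) (auto simp: norm_sgn)
    finally show ?thesis by (simp add: mult.commute)
  qed (use M_attained[of 0] in auto)
  have "0 < M w"
  proof -
    obtain v where v: "\<forall>i<n. 0 < v \<bullet> z i" using separable unfolding z_def by auto
    then have "v \<noteq> 0" using \<open>0 < n\<close> by auto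
    obtain j where "j < n" "M (sgn v) = sgn v \<bullet> z j" using M_attained by blast
    then have "0 < M (sgn v)" using v \<open>v \<noteq> 0\<close> by (simp add: sgn_div_norm)
    also have "\<dots> \<le> M w" using w_opt \<open>v \<noteq> 0\<close> by (simp add: norm_sgn)
    finally show ?thesis .
  qed
  show ?thesis
    unfolding z_def[symmetric] margin_eq
  proof
    show "norm (z i) \<le> (\<Sum>i<n. norm (z i))" if "i < n" for i
      using that by (intro member_le_sum) auto
  qed (use \<open>0 < n\<close> norm_w \<open>0 < M w\<close> M_le scaled in \<open>auto simp: M_def inner_commute mult.commute\<close>)
qed

section \<open>The early-stopping schedule\<close>

definition m_start :: "real \<Rightarrow> real \<Rightarrow> real" where
  "m_start c \<alpha> = 1 / (\<alpha> powr (2 * c) * sqrt (ln \<alpha>))"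

definition m_aligned :: "real \<Rightarrow> real \<Rightarrow> real" where
  "m_aligned c \<alpha> = sqrt (ln \<alpha>) / \<alpha> powr (2 * c)"

(* With K = 2 (2c + p + 2) / gamma the level kappa * m_max K c alpha equals (2c + p + 2) ln alpha,
   which beats ln (exp (kappa a2) + 4 Z kappa T) with kappa T = O(alpha^(2c + p) ln alpha);
   see eventually_slow_escape. *)
definition m_max :: "real \<Rightarrow> real \<Rightarrow> real \<Rightarrow> real" where
  "m_max K c \<alpha> = K * ln \<alpha> / \<alpha> powr (2 * c)"

lemma flow_scale_at_schedule:
  assumes "0 < \<alpha>" "0 < l"
  shows "flow_scale \<alpha> l ((1 - c) / l * ln \<alpha>) = \<alpha> powr (2 * c)"
proof -
  have "- 2 * l * ((1 - c) / l * ln \<alpha>) = (- 2 * (1 - c)) * ln \<alpha>"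
    using assms by (simp add: field_simps)
  then have "flow_scale \<alpha> l ((1 - c) / l * ln \<alpha>) = \<alpha> powr 2 * \<alpha> powr (- 2 * (1 - c))"
    using assms by (simp add: flow_scale_def powr_def powr_realpow[symmetric])
  also have "\<dots> = \<alpha> powr (2 * c)" by (simp flip: powr_add)
  finally show ?thesis .
qed

lemma eventually_m_start_le_m_aligned: "eventually (\<lambda>\<alpha>. m_start c \<alpha> \<le> m_aligned c \<alpha>) at_top"
  unfolding m_start_def m_aligned_def by real_asymp

lemma eventually_m_aligned_less_m_max:
  "0 < K \<Longrightarrow> eventually (\<lambda>\<alpha>. m_aligned c \<alpha> < m_max K c \<alpha>) at_top"
  unfolding m_aligned_def m_max_def by real_asymp

lemma m_max_tendsto_0: "0 < c \<Longrightarrow> (m_max K c \<longlongrightarrow> 0) at_top"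
  unfolding m_max_def by real_asymp

context max_margin_data
begin

lemma align_err_schedule_tendsto_0:
  assumes "0 < c" "0 < K"
  shows "((\<lambda>\<alpha>. align_err (\<alpha> powr (2 * c)) (m_start c \<alpha>) (m_aligned c \<alpha>) (m_max K c \<alpha>)) \<longlongrightarrow> 0) at_top"
  unfolding align_err_def softmin_gap_def m_start_def m_aligned_def m_max_def
  using assms Cs_pos margin_pos n_pos by real_asymp

lemma eventually_slow_escape:
  assumes "0 < c" "c < 1" "0 < p" "0 < k"
    and lam_ge: "eventually (\<lambda>\<alpha>. k * \<alpha> powr (- p) \<le> lam \<alpha>) at_top"
  defines "\<kappa> \<equiv> \<lambda>\<alpha>. \<alpha> powr (2 * c) * \<gamma> / 2"
  shows "eventually (\<lambda>\<alpha>. ln (exp (\<kappa> \<alpha> * m_aligned c \<alpha>) + 4 * Z * \<kappa> \<alpha> * ((1 - c) / lam \<alpha> * ln \<alpha>))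
    < \<kappa> \<alpha> * m_max (2 * (2 * c + p + 2) / \<gamma>) c \<alpha>) at_top"
proof -
  have "eventually (\<lambda>\<alpha>::real. ln (exp (\<kappa> \<alpha> * m_aligned c \<alpha>) + 4 * Z * \<kappa> \<alpha> * ((1 - c) * ln \<alpha> * \<alpha> powr p / k))
      < \<kappa> \<alpha> * m_max (2 * (2 * c + p + 2) / \<gamma>) c \<alpha>) at_top"
    unfolding \<kappa>_def m_aligned_def m_max_def using assms(1-4) Z_pos margin_pos by real_asymp
  with lam_ge eventually_gt_at_top[of 1] show ?thesis
  proof eventually_elim
    case (elim \<alpha>)
    have "k / \<alpha> powr p \<le> lam \<alpha>" using elim(1) by (simp add: powr_minus divide_inverse)
    moreover have "0 < k / \<alpha> powr p" using assms(4) elim(2) by simp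
    ultimately have "0 < lam \<alpha>" by linarith
    then have "1 / lam \<alpha> \<le> \<alpha> powr p / k"
      using \<open>k / \<alpha> powr p \<le> lam \<alpha>\<close> assms(4) elim(2) by (simp add: field_simps)
    then have "(1 - c) * ln \<alpha> * (1 / lam \<alpha>) \<le> (1 - c) * ln \<alpha> * (\<alpha> powr p / k)"
      using assms(2) elim(2) by (intro mult_left_mono) auto
    then have "4 * Z * \<kappa> \<alpha> * ((1 - c) / lam \<alpha> * ln \<alpha>) \<le> 4 * Z * \<kappa> \<alpha> * ((1 - c) * ln \<alpha> * \<alpha> powr p / k)"
      using Z_pos margin_pos by (intro mult_left_mono) (auto simp: \<kappa>_def)
    moreover have "0 \<le> 4 * Z * \<kappa> \<alpha> * ((1 - c) / lam \<alpha> * ln \<alpha>)"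
      using \<open>0 < k / \<alpha> powr p\<close> \<open>k / \<alpha> powr p \<le> lam \<alpha>\<close> elim(2) assms(2) Z_pos margin_pos
      by (auto simp: \<kappa>_def intro!: mult_nonneg_nonneg)
    ultimately show ?case
      using elim(3) by (smt (verit) exp_gt_zero ln_le_cancel_iff)
  qed
qed

lemma eventually_fast_start:
  assumes "0 < c" "0 < p" "0 < k" and lam_pos: "\<forall>\<alpha>>0. 0 < lam \<alpha>"
    and lam_le: "eventually (\<lambda>\<alpha>. lam \<alpha> \<le> k * \<alpha> powr (- p)) at_top"
  defines "\<kappa> \<equiv> \<lambda>\<alpha>. 4 * exp 2 * \<alpha> powr (2 * c) * Z * Cs"
  shows "eventually (\<lambda>\<alpha>. m_aligned c \<alpha> \<le> ln (1 + \<kappa> \<alpha> * (4 * \<gamma> / real n) / lam \<alpha>) / \<kappa> \<alpha>) at_top"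
proof -
  have "eventually (\<lambda>\<alpha>::real. m_aligned c \<alpha> \<le> ln (1 + \<kappa> \<alpha> * (4 * \<gamma> / real n) * (\<alpha> powr p / k)) / \<kappa> \<alpha>) at_top"
    unfolding \<kappa>_def m_aligned_def using assms(1-3) Z_pos Cs_pos margin_pos n_pos by real_asymp
  with lam_le eventually_gt_at_top[of 0] show ?thesis
  proof eventually_elim
    case (elim \<alpha>)
    define A where "A = \<kappa> \<alpha> * (4 * \<gamma> / real n)"
    have A_pos: "0 < A"
      unfolding A_def \<kappa>_def using Z_pos Cs_pos margin_pos n_pos elim(2) by simp
    have "\<alpha> powr p / k \<le> 1 / lam \<alpha>"
      using elim(1,2) lam_pos[rule_format, OF elim(2)] assms(3) by (simp add: powr_minus field_simps)
    then have "A * (\<alpha> powr p / k) \<le> A * (1 / lam \<alpha>)"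
      using A_pos by (intro mult_left_mono) auto
    then have "ln (1 + A * (\<alpha> powr p / k)) \<le> ln (1 + A / lam \<alpha>)"
      using A_pos assms(3) elim(2) by (intro ln_mono) (auto intro: add_pos_nonneg)
    moreover have "0 < \<kappa> \<alpha>" unfolding \<kappa>_def using Z_pos Cs_pos elim(2) by simp
    ultimately show ?case
      using elim(3) unfolding A_def[symmetric] by (smt (verit) divide_right_mono)
  qed
qed

lemma eventually_schedule_small:
  assumes "0 < c" "0 < K"
  shows "eventually (\<lambda>\<alpha>. Cs * m_max K c \<alpha> \<le> 1 \<and> Z * (Cs * m_max K c \<alpha>)^2 \<le> \<gamma> / 4 \<and>
    Z * sqrt (2 * align_err (\<alpha> powr (2 * c)) (m_start c \<alpha>) (m_aligned c \<alpha>) (m_max K c \<alpha>)) \<le> \<gamma> / 2) at_top"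
proof -
  note \<rho>_lim = tendsto_mult_right_zero[OF m_max_tendsto_0[OF assms(1)], of Cs K]
  note \<delta>_lim = align_err_schedule_tendsto_0[OF assms]
  have "eventually (\<lambda>\<alpha>. Cs * m_max K c \<alpha> \<le> 1) at_top"
    by (rule eventually_le_if_tendsto_less[OF \<rho>_lim]) simp
  moreover have "((\<lambda>\<alpha>. Z * (Cs * m_max K c \<alpha>)^2) \<longlongrightarrow> Z * 0^2) at_top"
    by (intro tendsto_intros \<rho>_lim)
  then have "eventually (\<lambda>\<alpha>. Z * (Cs * m_max K c \<alpha>)^2 \<le> \<gamma> / 4) at_top"
    by (rule eventually_le_if_tendsto_less) (use margin_pos in simp)
  moreover have "((\<lambda>\<alpha>. Z * sqrt (2 * align_err (\<alpha> powr (2 * c)) (m_start c \<alpha>) (m_aligned c \<alpha>) (m_max K c \<alpha>)))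
      \<longlongrightarrow> Z * sqrt (2 * 0)) at_top"
    by (intro tendsto_intros \<delta>_lim)
  then have "eventually (\<lambda>\<alpha>. Z * sqrt (2 * align_err (\<alpha> powr (2 * c)) (m_start c \<alpha>) (m_aligned c \<alpha>) (m_max K c \<alpha>))
      \<le> \<gamma> / 2) at_top"
    by (rule eventually_le_if_tendsto_less) (use margin_pos in simp)
  ultimately show ?thesis by eventually_elim blast
qed

lemma sgn_sinh_flow_tendsto:
  fixes lam :: "real \<Rightarrow> real" and s :: "real \<Rightarrow> real \<Rightarrow> real^'d"
  assumes "0 < p" "0 < c" "c < 1" and lam_rate: "lam \<in> \<Theta>[at_top](\<lambda>\<alpha>. \<alpha> powr (- p))"
    and flows: "\<And>\<alpha>. 0 < \<alpha> \<Longrightarrow> sinh_flow n z w \<gamma> Z (lam \<alpha>) \<alpha> (s \<alpha>)"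
  shows "((\<lambda>\<alpha>. sgn (sinh_vec (s \<alpha> ((1 - c) / lam \<alpha> * ln \<alpha>)))) \<longlongrightarrow> w) at_top"
proof -
  define K where "K = 2 * (2 * c + p + 2) / \<gamma>"
  define \<delta> where "\<delta> \<alpha> = align_err (\<alpha> powr (2 * c)) (m_start c \<alpha>) (m_aligned c \<alpha>) (m_max K c \<alpha>)" for \<alpha>
  define err where "err \<alpha> = 2 * (Cs * m_max K c \<alpha>)^2 + sqrt (2 * \<delta> \<alpha>)" for \<alpha>
  have K_pos: "0 < K" unfolding K_def using assms(1,2) margin_pos by simp
  have lam_pos: "\<forall>\<alpha>>0. 0 < lam \<alpha>" using sinh_flow.lam_pos[OF flows] by blast
  obtain k1 k2 where k: "0 < k1" "0 < k2" and lam_bounds: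
    "eventually (\<lambda>\<alpha>. k1 * \<alpha> powr (- p) \<le> lam \<alpha>) at_top" "eventually (\<lambda>\<alpha>. lam \<alpha> \<le> k2 * \<alpha> powr (- p)) at_top"
    using bigtheta_powr_bounds[OF lam_rate lam_pos] by blast
  have "((\<lambda>\<alpha>. 2 * (Cs * m_max K c \<alpha>)^2 + sqrt (2 * \<delta> \<alpha>)) \<longlongrightarrow> 2 * (Cs * 0)^2 + sqrt (2 * 0)) at_top"
    unfolding \<delta>_def
    by (intro tendsto_intros m_max_tendsto_0 align_err_schedule_tendsto_0 assms(2) K_pos)
  then have err_lim: "(err \<longlongrightarrow> 0) at_top" unfolding err_def by simp
  have "eventually (\<lambda>\<alpha>::real. 1 \<le> (1 - c) * ln \<alpha>) at_top"
    using assms(3) by real_asymp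
  then have "eventually (\<lambda>\<alpha>. norm (sgn (sinh_vec (s \<alpha> ((1 - c) / lam \<alpha> * ln \<alpha>))) - w) \<le> err \<alpha>) at_top"
    using eventually_gt_at_top[of 1] eventually_m_start_le_m_aligned[of c]
      eventually_m_aligned_less_m_max[OF K_pos, of c] eventually_schedule_small[OF assms(2) K_pos]
      eventually_slow_escape[where lam = lam, OF assms(2,3,1) k(1) lam_bounds(1)]
      eventually_fast_start[where lam = lam, OF assms(2,1) k(2) lam_pos lam_bounds(2)]
    unfolding K_def[symmetric]
  proof eventually_elim
    case (elim \<alpha>)
    then have "0 < \<alpha>" "0 < lam \<alpha>" "0 < ln \<alpha>" using lam_pos by auto
    then have T: "0 < (1 - c) / lam \<alpha> * ln \<alpha>" "1 / lam \<alpha> \<le> (1 - c) / lam \<alpha> * ln \<alpha>"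
      using assms(3) elim(1) by (auto simp: divide_right_mono)
    note bound = sinh_flow.norm_sgn_sinh_vec_s_minus_le[OF flows[OF \<open>0 < \<alpha>\<close>] T,
        of "m_start c \<alpha>" "m_aligned c \<alpha>" "m_max K c \<alpha>",
        unfolded flow_scale_at_schedule[OF \<open>0 < \<alpha>\<close> \<open>0 < lam \<alpha>\<close>]]
    have "0 < m_start c \<alpha>" using \<open>0 < \<alpha>\<close> \<open>0 < ln \<alpha>\<close> by (simp add: m_start_def)
    then show ?case
      unfolding err_def \<delta>_def using elim by (intro bound) auto
  qed
  then have "((\<lambda>\<alpha>. sgn (sinh_vec (s \<alpha> ((1 - c) / lam \<alpha> * ln \<alpha>))) - w) \<longlongrightarrow> 0) at_top"
    by (rule Lim_null_comparison[OF _ err_lim])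
  then show ?thesis by (rule LIM_zero_cancel)
qed

end

theorem corollary3p1:
  fixes x :: "nat \<Rightarrow> real^'d" and y :: "nat \<Rightarrow> real" and n :: nat
    and lam :: "real \<Rightarrow> real" and p c :: real
    and \<theta> :: "real \<Rightarrow> real \<Rightarrow> (real^'d) \<times> (real^'d)"
    and wstar :: "real^'d"
  assumes n_pos: "n > 0"
    and labels: "\<forall>i<n. y i = 1 \<or> y i = -1"
    and separable: "\<exists>w. \<forall>i<n. y i * (w \<bullet> x i) > 0"
    and p_pos: "p > 0"
    and lam_pos: "\<forall>\<alpha>>0. lam \<alpha> > 0"
    and lam_rate: "lam \<in> \<Theta>[at_top](\<lambda>\<alpha>. \<alpha> powr (- p))"
    and c_range: "0 < c" "c < 1"
    and flow: "\<forall>\<alpha>>0. is_gradient_flow (reg_loss (lam \<alpha>) n x y)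
                 ((\<chi> k. \<alpha>), (\<chi> k. \<alpha>)) (\<theta> \<alpha>)"
    and wstar: "is_max_L2_margin_dir n x y wstar"
  shows "((\<lambda>\<alpha>. let w = eff_weight (\<theta> \<alpha> ((1 - c) / lam \<alpha> * ln \<alpha>))
                in inverse (norm w) *\<^sub>R w) \<longlongrightarrow> wstar) at_top"
proof -
  define z where "z i = y i *\<^sub>R x i" for i
  define s where "s \<alpha> t = log_ratio (\<theta> \<alpha> t)" for \<alpha> t
  define T where "T \<alpha> = (1 - c) / lam \<alpha> * ln \<alpha>" for \<alpha>
  have data: "max_margin_data n z wstar (margin n x y wstar) (\<Sum>i<n. norm (z i))"
    unfolding z_def by (rule max_margin_data_if_max_L2_margin_dir[OF n_pos separable wstar])
  note flow_facts = gradient_flow_log_ratio[OF n_pos _ flow[rule_format], folded z_def s_def]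
  have "sinh_flow n z wstar (margin n x y wstar) (\<Sum>i<n. norm (z i)) (lam \<alpha>) \<alpha> (s \<alpha>)" if "0 < \<alpha>" for \<alpha>
    using flow_facts[OF that that] lam_pos that by (intro sinh_flow.intro[OF data] sinh_flow_axioms.intro) auto
  then have "((\<lambda>\<alpha>. sgn (sinh_vec (s \<alpha> (T \<alpha>)))) \<longlongrightarrow> wstar) at_top"
    unfolding T_def by (rule max_margin_data.sgn_sinh_flow_tendsto[OF data p_pos c_range lam_rate])
  moreover have "eventually (\<lambda>\<alpha>. sgn (sinh_vec (s \<alpha> (T \<alpha>)))
      = (let w = eff_weight (\<theta> \<alpha> (T \<alpha>)) in inverse (norm w) *\<^sub>R w)) at_top"
    using eventually_gt_at_top[of 1]
  proof eventually_elim
    case (elim \<alpha>)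
    then have "0 \<le> T \<alpha>" unfolding T_def using lam_pos c_range by (simp add: less_imp_le)
    then show ?case
      using flow_facts(3)[of \<alpha> "T \<alpha>"] elim
      by (simp add: Let_def sgn_scaleR flow_scale_def flip: sgn_div_norm)
  qed
  ultimately show ?thesis
    unfolding T_def by (rule Lim_transform_eventually)
qed

end
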